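(* Let $C$ be a bivariate copula and let $C^\uparrow$ and $C^\downarrow$ be its increasing and decreasing rearranged copulas. Then (i) $\xi(C^\downarrow)=\xi(C)=\xi(C^\uparrow)$; (ii) $\rho(C^\downarrow)\le\rho(C)\le\rho(C^\uparrow)$ and $\rho(C^\downarrow)=-\rho(C^\uparrow)$.
   Context: A bivariate copula is a function $C:[0,1]^2\to[0,1]$ that is grounded, has uniform margins and is 2-increasing. $\rho(C)=12\int_{[0,1]^2}C\,du\,dv-3$ and $\xi(C)=6\int_0^1\int_0^1(\partial_1C(t,v))^2\,dt\,dv-2$, with $\partial_1$ the partial derivative in the first argument. A copula is SI (resp. SD) if it is concave (resp. convex) in its first argument. For measurable $f,g:[0,1]\to[0,1]$, write $f\prec_S g$ if $\int_0^x f^*(t)\,dt\le\int_0^x g^*(t)\,dt$ for all $x\in(0,1)$ and $\int_0^1 f=\int_0^1 g$, where $h^*$ denotes the decreasing rearrangement of $h$ (the a.e.-unique decreasing function with $\lambda(h^*\ge s)=\lambda(h\ge s)$ for all $s$). For copulas $D,E$, write $D\le_{\partial_1S}E$ if $\partial_1D(\cdot,v)\prec_S\partial_1E(\cdot,v)$ for all $v\in[0,1]$, and $D=_{\partial_1S}E$ if both $D\le_{\partial_1S}E$ and $E\le_{\partial_1S}D$. It is known that for every copula $C$ there exist a unique SI copula $C^\uparrow$ and a unique SD copula $C^\downarrow$ with $C^\downarrow=_{\partial_1S}C=_{\partial_1S}C^\uparrow$; these are called the increasing and decreasing rearranged copulas of $C$, and they satisfy $C^\downarrow(u,v)=v-C^\uparrow(1-u,v)$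 and $C^\downarrow\le C\le C^\uparrow$ pointwise. *)

theory Defs
  imports "HOL-Analysis.Analysis"
begin

text \<open>Bivariate copulas, viewed as functions real => real => real whose values
  outside the unit square are irrelevant.\<close>
definition copula :: "(real \<Rightarrow> real \<Rightarrow> real) \<Rightarrow> bool" where
  "copula C \<longleftrightarrow>
     (\<forall>u\<in>{0..1}. \<forall>v\<in>{0..1}. C u v \<in> {0..1}) \<and>
     (\<forall>u\<in>{0..1}. C u 0 = 0 \<and> C 0 u = 0) \<and>
     (\<forall>u\<in>{0..1}. C u 1 = u \<and> C 1 u = u) \<and>
     (\<forall>u1\<in>{0..1}. \<forall>u2\<in>{0..1}. \<forall>v1\<in>{0..1}. \<forall>v2\<in>{0..1}.
        u1 \<le> u2 \<longrightarrow> v1 \<le> v2 \<longrightarrow> C u2 v2 - C u2 v1 - C u1 v2 + C u1 v1 \<ge> 0)"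

text \<open>Partial derivative in the first argument (where it exists; set to 0 elsewhere,
  which is a null set for copulas).\<close>
definition d1 :: "(real \<Rightarrow> real \<Rightarrow> real) \<Rightarrow> real \<Rightarrow> real \<Rightarrow> real" where
  "d1 C t v = (if \<exists>D. ((\<lambda>s. C s v) has_real_derivative D) (at t)
               then (THE D. ((\<lambda>s. C s v) has_real_derivative D) (at t)) else 0)"

definition spearman_rho :: "(real \<Rightarrow> real \<Rightarrow> real) \<Rightarrow> real" where
  "spearman_rho C = 12 * integral ({0..1} \<times> {0..1}) (\<lambda>(u, v). C u v) - 3"

definition chatterjee_xi :: "(real \<Rightarrow> real \<Rightarrow> real) \<Rightarrow> real" where
  "chatterjee_xi C = 6 * integral ({0..1} \<times> {0..1}) (\<lambda>(t, v). (d1 C t v)\<^sup>2) - 2"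

definition SI :: "(real \<Rightarrow> real \<Rightarrow> real) \<Rightarrow> bool" where
  "SI C \<longleftrightarrow> (\<forall>v\<in>{0..1}. concave_on {0..1} (\<lambda>u. C u v))"

definition SD :: "(real \<Rightarrow> real \<Rightarrow> real) \<Rightarrow> bool" where
  "SD C \<longleftrightarrow> (\<forall>v\<in>{0..1}. convex_on {0..1} (\<lambda>u. C u v))"

definition is_decr_rearr :: "(real \<Rightarrow> real) \<Rightarrow> (real \<Rightarrow> real) \<Rightarrow> bool" where
  "is_decr_rearr f g \<longleftrightarrow> antimono_on {0..1} g \<and>
     (\<forall>s. measure lborel {t\<in>{0..1}. g t \<ge> s} = measure lborel {x\<in>{0..1}. f x \<ge> s})"

definition schur_le :: "(real \<Rightarrow> real) \<Rightarrow> (real \<Rightarrow> real) \<Rightarrow> bool" where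
  "schur_le f g \<longleftrightarrow>
     (\<forall>fs gs. is_decr_rearr f fs \<longrightarrow> is_decr_rearr g gs \<longrightarrow>
        (\<forall>x\<in>{0<..<1}. integral {0..x} fs \<le> integral {0..x} gs)) \<and>
     integral {0..1} f = integral {0..1} g"

definition d1S_le :: "(real \<Rightarrow> real \<Rightarrow> real) \<Rightarrow> (real \<Rightarrow> real \<Rightarrow> real) \<Rightarrow> bool" where
  "d1S_le D E \<longleftrightarrow> (\<forall>v\<in>{0..1}. schur_le (\<lambda>t. d1 D t v) (\<lambda>t. d1 E t v))"

definition d1S_eq :: "(real \<Rightarrow> real \<Rightarrow> real) \<Rightarrow> (real \<Rightarrow> real \<Rightarrow> real) \<Rightarrow> bool" where
  "d1S_eq D E \<longleftrightarrow> d1S_le D E \<and> d1S_le E D"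

text \<open>Increasing / decreasing rearranged copulas (unique by the known result).\<close>
definition incr_rearranged :: "(real \<Rightarrow> real \<Rightarrow> real) \<Rightarrow> (real \<Rightarrow> real \<Rightarrow> real) \<Rightarrow> bool" where
  "incr_rearranged C Cu \<longleftrightarrow> copula Cu \<and> SI Cu \<and> d1S_eq Cu C"

definition decr_rearranged :: "(real \<Rightarrow> real \<Rightarrow> real) \<Rightarrow> (real \<Rightarrow> real \<Rightarrow> real) \<Rightarrow> bool" where
  "decr_rearranged C Cd \<longleftrightarrow> copula Cd \<and> SD Cd \<and> d1S_eq Cd C"

end

theory Submission
  imports Defs
begin

text \<open>
  For a fixed \<open>v\<close>, the section \<open>u \<mapsto> C\<^sup>\<up>(u, v)\<close> of an SI copula is concave, so its right
  derivative \<open>R\<close> is decreasing and \<open>C\<^sup>\<up>(u, v) = \<integral>\<^sub>0\<^sup>u R\<close>. Outside the countably many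
  discontinuities of \<open>R\<close>, \<open>R = \<partial>\<^sub>1C\<^sup>\<up>(\<cdot>, v)\<close>, so \<open>R\<close> is the decreasing rearrangement of
  \<open>\<partial>\<^sub>1C\<^sup>\<up>(\<cdot>, v)\<close>. Schur equivalence makes the partial integrals of \<open>R\<close> and of the decreasing
  rearrangement \<open>f\<^sup>*\<close> of \<open>f = \<partial>\<^sub>1C(\<cdot>, v)\<close> agree; two decreasing functions with the same
  partial integrals coincide almost everywhere, so \<open>C\<^sup>\<up>(u, v) = \<integral>\<^sub>0\<^sup>u f\<^sup>*\<close> and
  \<open>\<partial>\<^sub>1C\<^sup>\<up>(\<cdot>, v)\<close> is equimeasurable with \<open>f\<close>. As \<open>\<xi>\<close> only depends on the distributions of
  these sections, \<open>\<xi>(C\<^sup>\<up>) = \<xi>(C)\<close>.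

  For \<open>C \<le> C\<^sup>\<up>\<close> we need \<open>C(u, v) = \<integral>\<^sub>0\<^sup>u f\<close>, although \<open>C(\<cdot>, v)\<close> is merely Lipschitz.
  Fatou's lemma applied to difference quotients gives \<open>\<integral>\<^sub>0\<^sup>u f \<le> C(u, v)\<close> and
  \<open>\<integral>\<^sub>u\<^sup>1 f \<le> v - C(u, v)\<close>, while \<open>\<integral>\<^sub>0\<^sup>1 f = \<integral>\<^sub>0\<^sup>1 f\<^sup>* = C\<^sup>\<up>(1, v) = v\<close>; so both are
  equalities, and the Hardy-Littlewood inequality \<open>\<integral>\<^sub>0\<^sup>u f \<le> \<integral>\<^sub>0\<^sup>u f\<^sup>*\<close> gives \<open>C \<le> C\<^sup>\<up>\<close>
  and hence \<open>\<rho>(C) \<le> \<rho>(C\<^sup>\<up>)\<close>.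

  The reflection \<open>u \<mapsto> 1 - u\<close>, \<open>C(u, v) \<mapsto> v - C(1 - u, v)\<close>, maps \<open>C\<^sup>\<down>\<close> to the increasing
  rearrangement of the reflection of \<open>C\<close>. This gives \<open>C\<^sup>\<down>(u, v) = v - C\<^sup>\<up>(1 - u, v)\<close>,
  \<open>C\<^sup>\<down> \<le> C\<close> and \<open>\<xi>(C\<^sup>\<down>) = \<xi>(C)\<close>. Finally, reflection negates \<open>\<rho>\<close>.
\<close>

lemma
  assumes "copula C"
  shows copula_range: "\<And>u v. u \<in> {0..1} \<Longrightarrow> v \<in> {0..1} \<Longrightarrow> 0 \<le> C u v \<and> C u v \<le> 1"
    and copula_u0: "\<And>u. u \<in> {0..1} \<Longrightarrow> C u 0 = 0"
    and copula_0v: "\<And>v. v \<in> {0..1} \<Longrightarrow> C 0 v = 0"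
    and copula_u1: "\<And>u. u \<in> {0..1} \<Longrightarrow> C u 1 = u"
    and copula_1v: "\<And>v. v \<in> {0..1} \<Longrightarrow> C 1 v = v"
    and copula_rect: "\<And>u1 u2 v1 v2. u1 \<in> {0..1} \<Longrightarrow> u2 \<in> {0..1} \<Longrightarrow> v1 \<in> {0..1} \<Longrightarrow>
        v2 \<in> {0..1} \<Longrightarrow> u1 \<le> u2 \<Longrightarrow> v1 \<le> v2 \<Longrightarrow> C u2 v2 - C u2 v1 - C u1 v2 + C u1 v1 \<ge> 0"
  using assms unfolding copula_def by auto

lemma copula_mono1:
  assumes "copula C" "u1 \<in> {0..1}" "u2 \<in> {0..1}" "v \<in> {0..1}" "u1 \<le> u2"
  shows "C u1 v \<le> C u2 v"
  using copula_rect[OF assms(1), of u1 u2 0 v] copula_u0[OF assms(1)] assms by auto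

lemma copula_mono2:
  assumes "copula C" "v1 \<in> {0..1}" "v2 \<in> {0..1}" "u \<in> {0..1}" "v1 \<le> v2"
  shows "C u v1 \<le> C u v2"
  using copula_rect[OF assms(1), of 0 u v1 v2] copula_0v[OF assms(1)] assms by auto

lemma copula_increment1_le:
  assumes "copula C" "u1 \<in> {0..1}" "u2 \<in> {0..1}" "v \<in> {0..1}" "u1 \<le> u2"
  shows "C u2 v - C u1 v \<le> u2 - u1"
  using copula_rect[OF assms(1), of u1 u2 v 1] copula_u1[OF assms(1)] assms by auto

lemma copula_increment2_le:
  assumes "copula C" "v1 \<in> {0..1}" "v2 \<in> {0..1}" "u \<in> {0..1}" "v1 \<le> v2"
  shows "C u v2 - C u v1 \<le> v2 - v1"
  using copula_rect[OF assms(1), of u 1 v1 v2] copula_1v[OF assms(1)] assms by auto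

lemma copula_lipschitz1:
  assumes "copula C" "u1 \<in> {0..1}" "u2 \<in> {0..1}" "v \<in> {0..1}"
  shows "\<bar>C u2 v - C u1 v\<bar> \<le> \<bar>u2 - u1\<bar>"
  using copula_increment1_le[OF assms(1) assms(2,3,4)]
    copula_increment1_le[OF assms(1) assms(3,2,4)]
    copula_mono1[OF assms(1) assms(2,3,4)] copula_mono1[OF assms(1) assms(3,2,4)]
  by (cases "u1 \<le> u2") auto

lemma copula_lipschitz2:
  assumes "copula C" "v1 \<in> {0..1}" "v2 \<in> {0..1}" "u \<in> {0..1}"
  shows "\<bar>C u v2 - C u v1\<bar> \<le> \<bar>v2 - v1\<bar>"
  using copula_increment2_le[OF assms(1) assms(2,3,4)]
    copula_increment2_le[OF assms(1) assms(3,2,4)]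
    copula_mono2[OF assms(1) assms(2,3,4)] copula_mono2[OF assms(1) assms(3,2,4)]
  by (cases "v1 \<le> v2") auto

definition clamp01 :: "real \<Rightarrow> real" where
  "clamp01 x = max 0 (min 1 x)"

lemma clamp01_in: "clamp01 x \<in> {0..1}"
  and clamp01_id: "x \<in> {0..1} \<Longrightarrow> clamp01 x = x"
  and clamp01_mono: "x \<le> y \<Longrightarrow> clamp01 x \<le> clamp01 y"
  and clamp01_lipschitz: "\<bar>clamp01 x - clamp01 y\<bar> \<le> \<bar>x - y\<bar>"
  by (auto simp: clamp01_def)

definition copula_ext :: "(real \<Rightarrow> real \<Rightarrow> real) \<Rightarrow> real \<Rightarrow> real \<Rightarrow> real" where
  "copula_ext C s w = C (clamp01 s) (clamp01 w)"

lemma copula_ext_eq: "s \<in> {0..1} \<Longrightarrow> w \<in> {0..1} \<Longrightarrow> copula_ext C s w = C s w"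
  by (simp add: copula_ext_def clamp01_id)

lemma copula_ext_lipschitz:
  assumes "copula C"
  shows "\<bar>copula_ext C s w - copula_ext C s' w'\<bar> \<le> \<bar>s - s'\<bar> + \<bar>w - w'\<bar>"
proof -
  have "\<bar>copula_ext C s w - copula_ext C s' w'\<bar>
      \<le> \<bar>C (clamp01 s) (clamp01 w) - C (clamp01 s') (clamp01 w)\<bar>
        + \<bar>C (clamp01 s') (clamp01 w) - C (clamp01 s') (clamp01 w')\<bar>"
    unfolding copula_ext_def by linarith
  also have "\<dots> \<le> \<bar>clamp01 s - clamp01 s'\<bar> + \<bar>clamp01 w - clamp01 w'\<bar>"
    using copula_lipschitz1[OF assms, of "clamp01 s'" "clamp01 s" "clamp01 w"]
      copula_lipschitz2[OF assms, of "clamp01 w'" "clamp01 w" "clamp01 s'"] clamp01_in by auto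
  also have "\<dots> \<le> \<bar>s - s'\<bar> + \<bar>w - w'\<bar>"
    using clamp01_lipschitz[of s s'] clamp01_lipschitz[of w w'] by linarith
  finally show ?thesis .
qed

lemma continuous_on_copula_ext:
  assumes "copula C"
  shows "continuous_on UNIV (\<lambda>z. copula_ext C (fst z) (snd z))"
proof -
  have "dist (copula_ext C (fst z) (snd z)) (copula_ext C (fst z') (snd z')) \<le> 2 * dist z z'"
    for z z' :: "real \<times> real"
    using copula_ext_lipschitz[OF assms, of "fst z" "snd z" "fst z'" "snd z'"]
      dist_fst_le[of z z'] dist_snd_le[of z z'] by (simp add: dist_real_def)
  then have "2-lipschitz_on UNIV (\<lambda>z. copula_ext C (fst z) (snd z))"
    by (auto simp: lipschitz_on_def)
  then show ?thesis by (rule lipschitz_on_continuous_on)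
qed

lemma continuous_on_copula_ext1:
  assumes "copula C"
  shows "continuous_on UNIV (\<lambda>s. copula_ext C s v)"
proof -
  have "continuous_on UNIV ((\<lambda>z. copula_ext C (fst z) (snd z)) \<circ> (\<lambda>s. (s, v)))"
    by (intro continuous_on_compose continuous_intros
        continuous_on_subset[OF continuous_on_copula_ext[OF assms]]) auto
  then show ?thesis by (simp add: o_def)
qed

lemma copula_ext_mono1:
  assumes "copula C" "x \<le> y"
  shows "copula_ext C x v \<le> copula_ext C y v"
  unfolding copula_ext_def by (rule copula_mono1) (use assms clamp01_mono clamp01_in in auto)

lemma copula_ext_increment1_le:
  assumes "copula C" "x \<le> y"
  shows "copula_ext C y v - copula_ext C x v \<le> y - x"
proof -
  have "copula_ext C y v - copula_ext C x v \<le> clamp01 y - clamp01 x"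
    unfolding copula_ext_def
    by (rule copula_increment1_le) (use assms clamp01_mono clamp01_in in auto)
  also have "\<dots> \<le> y - x"
    using clamp01_lipschitz[of y x] assms(2) by linarith
  finally show ?thesis .
qed

lemma continuous_on_copula_square:
  assumes "copula C"
  shows "continuous_on ({0..1} \<times> {0..1}) (\<lambda>(u, v). C u v)"
  using continuous_on_subset[OF continuous_on_copula_ext[OF assms], of "{0..1} \<times> {0..1}"]
  by (rule continuous_on_eq) (auto simp: copula_ext_eq)

section \<open>Measurability of the partial derivative\<close>

definition diff_quot :: "(real \<Rightarrow> real) \<Rightarrow> real \<Rightarrow> real \<Rightarrow> real" where
  "diff_quot \<phi> t h = (\<phi> (t + h) - \<phi> t) / h"

lemma tendsto_diff_quot:
  assumes "(\<phi> has_real_derivative D) (at t)" "\<delta> \<longlonglongrightarrow> 0" "\<And>n. \<delta> n \<noteq> 0"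
  shows "(\<lambda>n. diff_quot \<phi> t (\<delta> n)) \<longlonglongrightarrow> D"
proof -
  have "(diff_quot \<phi> t) \<midarrow>0\<rightarrow> D"
    using assms(1) unfolding DERIV_def diff_quot_def .
  then show ?thesis
    using tendsto_compose_eventually[OF _ assms(2)] assms(3) by (simp add: o_def)
qed

lemma tendsto_inverse_Suc: "(\<lambda>n. 1 / (real n + 1)) \<longlonglongrightarrow> 0"
  using LIMSEQ_inverse_real_of_nat by (simp add: inverse_eq_divide add.commute)

lemma d1_eqI:
  assumes "((\<lambda>s. F s w) has_real_derivative D) (at t)"
  shows "d1 F t w = D"
proof -
  have "(THE D. ((\<lambda>s. F s w) has_real_derivative D) (at t)) = D"
    using assms DERIV_unique by blast
  then show ?thesis using assms unfolding d1_def by auto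
qed

lemma d1_cong_open:
  assumes "open S" "t \<in> S" "\<And>s. s \<in> S \<Longrightarrow> F s w = G s w"
  shows "d1 F t w = d1 G t w"
proof -
  have "((\<lambda>s. F s w) has_real_derivative X) (at t) \<longleftrightarrow> ((\<lambda>s. G s w) has_real_derivative X) (at t)"
    for X
  proof
    assume "((\<lambda>s. F s w) has_real_derivative X) (at t)"
    then show "((\<lambda>s. G s w) has_real_derivative X) (at t)"
      by (rule has_field_derivative_transform_within_open[OF _ assms(1,2)]) (rule assms(3))
  next
    assume "((\<lambda>s. G s w) has_real_derivative X) (at t)"
    then show "((\<lambda>s. F s w) has_real_derivative X) (at t)"
      by (rule has_field_derivative_transform_within_open[OF _ assms(1,2)])
        (rule assms(3)[symmetric])
  qed
  then show ?thesis unfolding d1_def by simp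
qed

text \<open>The Cauchy criterion for the difference quotients, restricted to rational increments: a
  countable condition, hence a measurable one, which for continuous \<open>\<phi>\<close> characterises
  differentiability.\<close>
definition quot_osc_le :: "(real \<Rightarrow> real) \<Rightarrow> real \<Rightarrow> nat \<Rightarrow> real \<Rightarrow> bool" where
  "quot_osc_le \<phi> t m c \<longleftrightarrow> (\<forall>q1 q2 :: rat.
     of_rat q1 \<noteq> (0::real) \<and> of_rat q2 \<noteq> (0::real) \<and>
     \<bar>of_rat q1\<bar> < 1 / (real m + 1) \<and> \<bar>of_rat q2\<bar> < 1 / (real m + 1) \<longrightarrow>
     \<bar>diff_quot \<phi> t (of_rat q1) - diff_quot \<phi> t (of_rat q2)\<bar> \<le> c)"

definition rat_quot_cauchy :: "(real \<Rightarrow> real) \<Rightarrow> real \<Rightarrow> bool" where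
  "rat_quot_cauchy \<phi> t \<longleftrightarrow> (\<forall>k::nat. \<exists>m. quot_osc_le \<phi> t m (1 / (real k + 1)))"

lemma rat_quot_cauchy_if_deriv:
  assumes "(\<phi> has_real_derivative D) (at t)"
  shows "rat_quot_cauchy \<phi> t"
  unfolding rat_quot_cauchy_def
proof
  fix k :: nat
  let ?e = "1 / (2 * (real k + 1))"
  have "(diff_quot \<phi> t) \<midarrow>0\<rightarrow> D" using assms unfolding DERIV_def diff_quot_def .
  moreover have "?e > 0" by simp
  ultimately obtain s where s: "s > 0"
    "\<And>x. x \<noteq> 0 \<and> norm (x - 0) < s \<Longrightarrow> norm (diff_quot \<phi> t x - D) < ?e"
    unfolding LIM_eq by blast
  obtain m :: nat where "1 / real (Suc m) < s" using nat_approx_posE[OF s(1)] by blast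
  then have m: "1 / (real m + 1) < s" by (simp add: add.commute)
  have "\<bar>diff_quot \<phi> t x - diff_quot \<phi> t y\<bar> \<le> 1 / (real k + 1)"
    if "x \<noteq> 0" "y \<noteq> 0" "\<bar>x\<bar> < s" "\<bar>y\<bar> < s" for x y
  proof -
    have "\<bar>diff_quot \<phi> t x - D\<bar> < ?e" "\<bar>diff_quot \<phi> t y - D\<bar> < ?e"
      using s(2)[of x] s(2)[of y] that by auto
    moreover have "?e + ?e = 1 / (real k + 1)" by (simp add: field_simps)
    ultimately show ?thesis by (smt (verit))
  qed
  then have "quot_osc_le \<phi> t m (1 / (real k + 1))"
    using m unfolding quot_osc_le_def by (auto dest: less_trans)
  then show "\<exists>m. quot_osc_le \<phi> t m (1 / (real k + 1))" ..
qed

lemma isCont_diff_quot: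
  assumes "continuous_on UNIV \<phi>" "h \<noteq> 0"
  shows "isCont (diff_quot \<phi> t) h"
proof -
  have "isCont \<phi> (t + h)" using assms(1) by (simp add: continuous_on_eq_continuous_at)
  then have "isCont (\<lambda>x. \<phi> (t + x)) h"
    by (intro continuous_intros isCont_o2[where f="\<lambda>x. t + x"]) auto
  then show ?thesis unfolding diff_quot_def using assms(2) by (intro continuous_intros) auto
qed

text \<open>Continuity of \<open>diff_quot \<phi> t\<close> away from 0 carries the bound over to real \<open>h\<close>.\<close>
lemma quot_osc_le_real:
  assumes cont: "continuous_on UNIV \<phi>" and osc: "quot_osc_le \<phi> t m c"
    and h: "h \<noteq> 0" "\<bar>h\<bar> < 1 / (real m + 1)"
    and q: "of_rat q \<noteq> (0::real)" "\<bar>of_rat q\<bar> < 1 / (real m + 1)"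
  shows "\<bar>diff_quot \<phi> t h - diff_quot \<phi> t (of_rat q)\<bar> \<le> c"
proof (rule field_le_epsilon)
  fix e :: real assume e: "0 < e"
  obtain d where d: "d > 0" "\<And>x. dist x h < d \<Longrightarrow> dist (diff_quot \<phi> t x) (diff_quot \<phi> t h) < e"
    using isCont_diff_quot[OF cont h(1)] e unfolding continuous_at_eps_delta by blast
  define \<rho> where "\<rho> = min d (min \<bar>h\<bar> (1 / (real m + 1) - \<bar>h\<bar>)) / 2"
  have \<rho>: "\<rho> > 0" "\<rho> < d" "\<rho> < \<bar>h\<bar>" "\<rho> < 1 / (real m + 1) - \<bar>h\<bar>"
    using d h unfolding \<rho>_def by auto
  obtain r where r: "r \<in> \<rat>" "h - \<rho> < r" "r < h + \<rho>"
    using Rats_dense_in_real[of "h - \<rho>" "h + \<rho>"] \<rho> by auto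
  then obtain p where p: "r = of_rat p" by (auto elim: Rats_cases)
  have "r \<noteq> 0" "\<bar>r\<bar> < 1 / (real m + 1)" using r \<rho> by auto
  then have "of_rat p \<noteq> (0::real)" "\<bar>of_rat p\<bar> < 1 / (real m + 1)" unfolding p .
  then have "\<bar>diff_quot \<phi> t (of_rat p) - diff_quot \<phi> t (of_rat q)\<bar> \<le> c"
    using osc q unfolding quot_osc_le_def by blast
  moreover have "\<bar>diff_quot \<phi> t (of_rat p) - diff_quot \<phi> t h\<bar> < e"
    using d(2)[of r] r \<rho> p by (auto simp: dist_real_def)
  ultimately show "\<bar>diff_quot \<phi> t h - diff_quot \<phi> t (of_rat q)\<bar> \<le> c + e" by linarith
qed

lemma quot_osc_le_inverse_Suc:
  assumes "continuous_on UNIV \<phi>" "quot_osc_le \<phi> t m c" "h \<noteq> 0" "\<bar>h\<bar> < 1 / (real m + 1)" "m < n"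
  shows "\<bar>diff_quot \<phi> t h - diff_quot \<phi> t (1 / (real n + 1))\<bar> \<le> c"
proof -
  have "of_rat (1 / (of_nat n + 1)) = 1 / (real n + 1)"
    by (simp add: of_rat_divide of_rat_add)
  moreover have "1 / (real n + 1) < 1 / (real m + 1)"
    using assms(5) by (simp add: frac_less2)
  ultimately show ?thesis
    using quot_osc_le_real[OF assms(1-4), of "1 / (of_nat n + 1)"] by simp
qed

lemma Cauchy_diff_quot_inverse_Suc:
  assumes cont: "continuous_on UNIV \<phi>" and P: "rat_quot_cauchy \<phi> t"
  shows "Cauchy (\<lambda>n. diff_quot \<phi> t (1 / (real n + 1)))"
proof (rule CauchyI)
  fix e :: real assume "0 < e"
  then obtain k :: nat where "1 / real (Suc k) < e" using nat_approx_posE by blast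
  then have k: "1 / (real k + 1) < e" by (simp add: add.commute)
  obtain m where m: "quot_osc_le \<phi> t m (1 / (real k + 1))"
    using P unfolding rat_quot_cauchy_def by blast
  have "\<bar>diff_quot \<phi> t (1 / (real i + 1)) - diff_quot \<phi> t (1 / (real j + 1))\<bar> < e"
    if "Suc m \<le> i" "Suc m \<le> j" for i j
    using quot_osc_le_inverse_Suc[OF cont m, of "1 / (real i + 1)" j] that k
    by (simp add: frac_less2)
  then show "\<exists>N. \<forall>i\<ge>N. \<forall>j\<ge>N.
      norm (diff_quot \<phi> t (1 / (real i + 1)) - diff_quot \<phi> t (1 / (real j + 1))) < e"
    by auto
qed

lemma deriv_if_rat_quot_cauchy:
  assumes cont: "continuous_on UNIV \<phi>" and P: "rat_quot_cauchy \<phi> t"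
  shows "\<exists>D. (\<phi> has_real_derivative D) (at t)"
proof -
  obtain L where L: "(\<lambda>n. diff_quot \<phi> t (1 / (real n + 1))) \<longlonglongrightarrow> L"
    using Cauchy_diff_quot_inverse_Suc[OF assms] Cauchy_convergent_iff convergent_def by blast
  obtain M where M: "\<And>k. quot_osc_le \<phi> t (M k) (1 / (real k + 1))"
    using P unfolding rat_quot_cauchy_def by metis
  have bound: "\<bar>diff_quot \<phi> t h - L\<bar> \<le> 1 / (real k + 1)"
    if "h \<noteq> 0" "\<bar>h\<bar> < 1 / (real (M k) + 1)" for h k
  proof (rule LIMSEQ_le_const2)
    show "(\<lambda>n. \<bar>diff_quot \<phi> t h - diff_quot \<phi> t (1 / (real n + 1))\<bar>) \<longlonglongrightarrow> \<bar>diff_quot \<phi> t h - L\<bar>"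
      by (intro tendsto_intros L)
    show "\<exists>N. \<forall>n\<ge>N. \<bar>diff_quot \<phi> t h - diff_quot \<phi> t (1 / (real n + 1))\<bar> \<le> 1 / (real k + 1)"
      using quot_osc_le_inverse_Suc[OF cont M that] by (auto intro!: exI[of _ "Suc (M k)"])
  qed
  have "(\<phi> has_real_derivative L) (at t)"
    unfolding DERIV_def LIM_eq
  proof (intro allI impI)
    fix r :: real assume "0 < r"
    then obtain k :: nat where "1 / real (Suc k) < r" using nat_approx_posE by blast
    then have k: "1 / (real k + 1) < r" by (simp add: add.commute)
    show "\<exists>s>0. \<forall>x. x \<noteq> 0 \<and> norm (x - 0) < s \<longrightarrow> norm ((\<phi> (t + x) - \<phi> t) / x - L) < r"
    proof (intro exI[of _ "1 / (real (M k) + 1)"] conjI allI impI)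
      fix x :: real assume "x \<noteq> 0 \<and> norm (x - 0) < 1 / (real (M k) + 1)"
      then have "\<bar>diff_quot \<phi> t x - L\<bar> \<le> 1 / (real k + 1)" using bound by auto
      then show "norm ((\<phi> (t + x) - \<phi> t) / x - L) < r" using k by (simp add: diff_quot_def)
    qed simp
  qed
  then show ?thesis by blast
qed

lemma borel_measurable_d1:
  assumes cont: "continuous_on UNIV (\<lambda>z. F (fst z) (snd z))"
  shows "(\<lambda>z. d1 F (fst z) (snd z)) \<in> borel_measurable borel"
proof -
  let ?Q = "\<lambda>z n. diff_quot (\<lambda>s. F s (snd z)) (fst z) (1 / (real n + 1))"
  have d1_eq: "d1 F (fst z) (snd z) =
      (if rat_quot_cauchy (\<lambda>s. F s (snd z)) (fst z) then lim (?Q z) else 0)" for z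
  proof (cases "\<exists>D. ((\<lambda>s. F s (snd z)) has_real_derivative D) (at (fst z))")
    case True
    then obtain D where D: "((\<lambda>s. F s (snd z)) has_real_derivative D) (at (fst z))" by blast
    then show ?thesis
      using d1_eqI[where F=F and w="snd z", OF D] rat_quot_cauchy_if_deriv[OF D]
        limI[OF tendsto_diff_quot[OF D tendsto_inverse_Suc]] by simp
  next
    case False
    have "continuous_on UNIV ((\<lambda>z. F (fst z) (snd z)) \<circ> (\<lambda>s. (s, snd z)))"
      by (intro continuous_on_compose continuous_intros continuous_on_subset[OF cont]) auto
    then have "\<not> rat_quot_cauchy (\<lambda>s. F s (snd z)) (fst z)"
      using False deriv_if_rat_quot_cauchy by (auto simp: o_def)
    then show ?thesis using False by (simp add: d1_def)
  qed
  have [measurable]: "(\<lambda>z. F (fst z + c) (snd z)) \<in> borel_measurable borel" for c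
  proof -
    have "continuous_on UNIV ((\<lambda>z. F (fst z) (snd z)) \<circ> (\<lambda>z. (fst z + c, snd z)))"
      by (intro continuous_on_compose continuous_intros continuous_on_subset[OF cont]) auto
    then show ?thesis by (intro borel_measurable_continuous_onI) (simp add: o_def)
  qed
  from this[of 0] have [measurable]: "(\<lambda>z. F (fst z) (snd z)) \<in> borel_measurable borel"
    by simp
  have [measurable]: "(\<lambda>z. diff_quot (\<lambda>s. F s (snd z)) (fst z) c) \<in> borel_measurable borel" for c
    unfolding diff_quot_def by measurable
  have [measurable]: "Measurable.pred borel (\<lambda>z. rat_quot_cauchy (\<lambda>s. F s (snd z)) (fst z))"
    unfolding rat_quot_cauchy_def quot_osc_le_def by measurable
  show ?thesis
    unfolding d1_eq by (rule measurable_If) (auto simp: pred_def)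
qed

section \<open>Integrals of difference quotients\<close>

lemma has_real_derivative_integral_upper:
  fixes g :: "real \<Rightarrow> real"
  assumes cont: "continuous_on UNIV g" and x: "c < x"
  shows "((\<lambda>x. integral {c..x} g) has_real_derivative g x) (at x)"
proof -
  have "((\<lambda>x. integral {c..x} g) has_vector_derivative g x) (at x within {c..x+1})"
    by (rule integral_has_vector_derivative) (use x cont continuous_on_subset in auto)
  moreover have "at x within {c..x+1} = at x"
    by (rule at_within_interior) (use x in auto)
  ultimately show ?thesis by (simp add: has_real_derivative_iff_has_vector_derivative)
qed

lemma has_integral_diff_quot:
  fixes g :: "real \<Rightarrow> real"
  assumes cont: "continuous_on UNIV g" and "c < a" "a \<le> b" "h > 0"
  defines "G \<equiv> \<lambda>x. integral {c..x} g"
  shows "((\<lambda>t. diff_quot g t h) has_integral diff_quot G b h - diff_quot G a h) {a..b}"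
proof (rule fundamental_theorem_of_calculus[OF \<open>a \<le> b\<close>])
  fix t assume t: "t \<in> {a..b}"
  have "((\<lambda>t. G (t + h)) has_real_derivative g (t + h) * 1) (at t)"
    unfolding G_def
    by (rule DERIV_chain2[OF has_real_derivative_integral_upper[OF cont]])
      (use t assms in \<open>auto intro!: derivative_eq_intros\<close>)
  moreover have "(G has_real_derivative g t) (at t)"
    unfolding G_def by (rule has_real_derivative_integral_upper[OF cont]) (use t assms in auto)
  ultimately have "((\<lambda>t. diff_quot G t h) has_real_derivative diff_quot g t h) (at t)"
    unfolding diff_quot_def using \<open>h > 0\<close> by (auto intro!: derivative_eq_intros)
  then show "((\<lambda>t. diff_quot G t h) has_vector_derivative diff_quot g t h) (at t within {a..b})"
    by (auto simp: has_real_derivative_iff_has_vector_derivative[symmetric]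
        intro: has_field_derivative_at_within)
qed

lemma integrable_on_diff_quot:
  fixes g :: "real \<Rightarrow> real"
  assumes "continuous_on UNIV g" "a \<le> b" "h > 0"
  shows "(\<lambda>t. diff_quot g t h) integrable_on {a..b}"
  using has_integral_diff_quot[OF assms(1) _ assms(2,3), of "a - 1"] by auto

lemma integral_diff_quot_tendsto:
  fixes g :: "real \<Rightarrow> real"
  assumes cont: "continuous_on UNIV g" and "a \<le> b" and \<delta>: "\<And>n. \<delta> n > 0" "\<delta> \<longlonglongrightarrow> 0"
  shows "(\<lambda>n. integral {a..b} (\<lambda>t. diff_quot g t (\<delta> n))) \<longlonglongrightarrow> g b - g a"
proof -
  define G where "G = (\<lambda>x. integral {a - 1..x} g)"
  have "integral {a..b} (\<lambda>t. diff_quot g t (\<delta> n)) = diff_quot G b (\<delta> n) - diff_quot G a (\<delta> n)" for n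
    using has_integral_diff_quot[OF cont _ \<open>a \<le> b\<close> \<delta>(1)] unfolding G_def
    by (simp add: integral_unique)
  moreover have "(\<lambda>n. diff_quot G x (\<delta> n)) \<longlonglongrightarrow> g x" if "a \<le> x" for x
    using tendsto_diff_quot[OF has_real_derivative_integral_upper[OF cont] \<delta>(2)] that \<delta>(1)
    unfolding G_def by (simp add: less_imp_neq[symmetric])
  ultimately show ?thesis
    using \<open>a \<le> b\<close> by (simp add: tendsto_diff)
qed

lemma integrable_on_borel_bounded:
  fixes f :: "real \<Rightarrow> real"
  assumes "f \<in> borel_measurable borel" "\<And>x. x \<in> {a..b} \<Longrightarrow> \<bar>f x\<bar> \<le> B"
  shows "f integrable_on {a..b}"
proof (rule measurable_bounded_by_integrable_imp_integrable[where g="\<lambda>_. B"])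
  have "f \<in> borel_measurable lebesgue"
    using assms(1) by (intro measurable_completion) simp
  then show "f \<in> borel_measurable (lebesgue_on {a..b})"
    by (rule measurable_restrict_space1)
qed (use assms in auto)

text \<open>A variant of Fatou's lemma, by dominated convergence for the truncations \<open>min q\<^sub>n f\<close>.\<close>
lemma integral_le_lim_if_min_tendsto:
  fixes f :: "real \<Rightarrow> real" and q :: "nat \<Rightarrow> real \<Rightarrow> real"
  assumes f: "f \<in> borel_measurable borel" "\<And>t. 0 \<le> f t \<and> f t \<le> 1"
    and q: "\<And>n. q n \<in> borel_measurable borel" "\<And>n. q n integrable_on {a..b}" "\<And>n t. 0 \<le> q n t"
    and lim: "\<And>t. (\<lambda>n. min (q n t) (f t)) \<longlonglongrightarrow> f t" "(\<lambda>n. integral {a..b} (q n)) \<longlonglongrightarrow> L"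
  shows "f integrable_on {a..b}" and "integral {a..b} f \<le> L"
proof -
  define h where "h n t = min (q n t) (f t)" for n t
  have h_bound: "\<bar>h n t\<bar> \<le> 1" for n t
    unfolding h_def using q(3)[of n t] f(2)[of t] by auto
  have "h n \<in> borel_measurable borel" for n
    unfolding h_def using f(1) q(1) by measurable
  then have h_int: "h n integrable_on {a..b}" for n
    using h_bound by (intro integrable_on_borel_bounded)
  have dc: "f integrable_on {a..b}" "(\<lambda>n. integral {a..b} (h n)) \<longlonglongrightarrow> integral {a..b} f"
    using dominated_convergence[of h "{a..b}" "\<lambda>_. 1" f, OF h_int integrable_const_ivl]
      h_bound lim(1)
    by (auto simp: h_def)
  then show "f integrable_on {a..b}" by simp
  have "integral {a..b} (h n) \<le> integral {a..b} (q n)" for n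
    by (rule integral_le[OF h_int q(2)]) (auto simp: h_def)
  then show "integral {a..b} f \<le> L"
    using LIMSEQ_le[OF dc(2) lim(2)] by auto
qed

lemma integral_d1_le_increment:
  fixes F :: "real \<Rightarrow> real \<Rightarrow> real"
  assumes cont: "continuous_on UNIV (\<lambda>s. F s w)"
    and mono: "mono (\<lambda>s. F s w)"
    and meas: "(\<lambda>t. d1 F t w) \<in> borel_measurable borel"
    and bnd: "\<And>t. 0 \<le> d1 F t w \<and> d1 F t w \<le> 1"
    and "a \<le> b"
  shows "(\<lambda>t. d1 F t w) integrable_on {a..b}"
    and "integral {a..b} (\<lambda>t. d1 F t w) \<le> F b w - F a w"
proof -
  let ?f = "\<lambda>t. d1 F t w" and ?g = "\<lambda>s. F s w"
  define \<delta> where "\<delta> n = 1 / (real n + 1)" for n :: nat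
  have \<delta>: "\<And>n. \<delta> n > 0" "\<delta> \<longlonglongrightarrow> 0"
    unfolding \<delta>_def using tendsto_inverse_Suc by auto
  define q where "q n t = diff_quot ?g t (\<delta> n)" for n t
  have q_nonneg: "q n t \<ge> 0" for n t
    unfolding q_def diff_quot_def using monoD[OF mono, of t "t + \<delta> n"] \<delta>(1)[of n] by auto
  have "continuous_on UNIV (q n)" for n
  proof -
    have "continuous_on UNIV (?g \<circ> (\<lambda>t. t + \<delta> n))"
      by (rule continuous_on_compose) (auto intro: continuous_intros continuous_on_subset[OF cont])
    then show ?thesis unfolding q_def diff_quot_def o_def using \<delta>(1)[of n]
      by (intro continuous_intros cont) auto
  qed
  then have q_meas: "q n \<in> borel_measurable borel" for n
    by (rule borel_measurable_continuous_onI)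
  have min_lim: "(\<lambda>n. min (q n t) (?f t)) \<longlonglongrightarrow> ?f t" for t
  proof (cases "\<exists>D. (?g has_real_derivative D) (at t)")
    case True
    then obtain D where D: "(?g has_real_derivative D) (at t)" by blast
    have "(\<lambda>n. q n t) \<longlonglongrightarrow> D"
      unfolding q_def using tendsto_diff_quot[OF D \<delta>(2)] \<delta>(1) by (simp add: less_imp_neq[symmetric])
    then show ?thesis
      unfolding d1_eqI[where F=F and w=w, OF D] using tendsto_min[of _ D _ "\<lambda>n. D" D] by auto
  next
    case False
    then have "?f t = 0" by (simp add: d1_def)
    then show ?thesis using q_nonneg by (simp add: min_absorb2)
  qed
  have int_lim: "(\<lambda>n. integral {a..b} (q n)) \<longlonglongrightarrow> ?g b - ?g a"
    unfolding q_def by (rule integral_diff_quot_tendsto[OF cont \<open>a \<le> b\<close> \<delta>])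
  have "q n integrable_on {a..b}" for n
    unfolding q_def by (rule integrable_on_diff_quot[OF cont \<open>a \<le> b\<close> \<delta>(1)])
  from integral_le_lim_if_min_tendsto[of ?f q, OF meas bnd q_meas this q_nonneg min_lim int_lim]
  show "?f integrable_on {a..b}" "integral {a..b} ?f \<le> F b w - F a w" by auto
qed

section \<open>The right derivative of a concave function\<close>

lemma mono_on_uminus_if_antimono_on:
  fixes p :: "real \<Rightarrow> real"
  shows "antimono_on A p \<Longrightarrow> mono_on A (\<lambda>t. - p t)"
  unfolding monotone_on_def by auto

lemma antimono_ctble_discont:
  fixes p :: "real \<Rightarrow> real"
  assumes "antimono_on {0..1} p"
  shows "countable {t \<in> {0<..<1}. \<not> isCont p t}"
proof -
  have "mono_on {0<..<1} (\<lambda>t. - p t)"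
    by (rule mono_on_subset[OF mono_on_uminus_if_antimono_on[OF assms]]) auto
  then have "countable {t \<in> {0<..<1}. \<not> isCont (\<lambda>t. - p t) t}"
    by (intro mono_on_ctble_discont_open) auto
  moreover have "isCont (\<lambda>t. - p t) t \<longleftrightarrow> isCont p t" for t
    using continuous_minus[of "at t" "\<lambda>t. - p t"] continuous_minus[of "at t" p] by auto
  ultimately show ?thesis by simp
qed

definition chord_slope :: "(real \<Rightarrow> real) \<Rightarrow> real \<Rightarrow> real \<Rightarrow> real" where
  "chord_slope g x y = (g y - g x) / (y - x)"

text \<open>The value 0 at \<open>t = 1\<close> is arbitrary: it only matters on a null set.\<close>
definition right_deriv :: "(real \<Rightarrow> real) \<Rightarrow> real \<Rightarrow> real" where
  "right_deriv g t = (if t < 1 then Sup (chord_slope g t ` {t<..1}) else 0)"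

locale concave_lipschitz01 =
  fixes g :: "real \<Rightarrow> real"
  assumes concave: "concave_on {0..1} g"
    and mono: "\<And>x y. 0 \<le> x \<Longrightarrow> x \<le> y \<Longrightarrow> y \<le> 1 \<Longrightarrow> g x \<le> g y"
    and lipschitz: "\<And>x y. 0 \<le> x \<Longrightarrow> x \<le> y \<Longrightarrow> y \<le> 1 \<Longrightarrow> g y - g x \<le> y - x"
    and cont: "continuous_on UNIV g"
begin

lemma chord_slope_antimono:
  assumes "0 \<le> x" "x < y" "y < z" "z \<le> 1"
  shows "chord_slope g x z \<le> chord_slope g x y" "chord_slope g y z \<le> chord_slope g x z"
proof -
  have "convex_on {0..1} (\<lambda>x. - g x)" using concave by (simp add: concave_on_def)
  from convex_on_slope_le[OF this _ _ assms(2,3)] assms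
  have "(- g x - - g y) / (x - y) \<le> (- g x - - g z) / (x - z)"
    "(- g x - - g z) / (x - z) \<le> (- g y - - g z) / (y - z)" by auto
  moreover have "(- g p - - g q) / (p - q) = - chord_slope g p q" if "p < q" for p q
    unfolding chord_slope_def using that by (simp add: field_simps)
  ultimately show "chord_slope g x z \<le> chord_slope g x y" "chord_slope g y z \<le> chord_slope g x z"
    using assms by auto
qed

lemma chord_slope_bounds:
  assumes "0 \<le> x" "x < y" "y \<le> 1"
  shows "0 \<le> chord_slope g x y" "chord_slope g x y \<le> 1"
  using mono[of x y] lipschitz[of x y] assms by (auto simp: chord_slope_def divide_simps)

lemma bdd_above_chord_slopes: "0 \<le> t \<Longrightarrow> bdd_above (chord_slope g t ` {t<..1})"
  using chord_slope_bounds by (auto intro!: bdd_aboveI[of _ 1])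

lemma chord_slope_le_right_deriv:
  assumes "0 \<le> t" "t < s" "s \<le> 1"
  shows "chord_slope g t s \<le> right_deriv g t"
  unfolding right_deriv_def using assms by (auto intro!: cSup_upper bdd_above_chord_slopes)

lemma right_deriv_le_chord_slope:
  assumes "0 \<le> t1" "t1 < t2" "t2 < 1"
  shows "right_deriv g t2 \<le> chord_slope g t1 t2"
proof -
  have "chord_slope g t2 z \<le> chord_slope g t1 t2" if "t2 < z" "z \<le> 1" for z
    using chord_slope_antimono[of t1 t2 z] assms that by linarith
  then show ?thesis unfolding right_deriv_def using assms by (auto intro!: cSup_least)
qed

lemma right_deriv_bounds:
  assumes "0 \<le> t" "t \<le> 1"
  shows "0 \<le> right_deriv g t \<and> right_deriv g t \<le> 1"
proof (cases "t = 1")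
  case False
  then have "0 \<le> right_deriv g t"
    using chord_slope_le_right_deriv[of t 1] chord_slope_bounds[of t 1] assms by auto
  moreover have "right_deriv g t \<le> 1"
    unfolding right_deriv_def using assms False chord_slope_bounds by (auto intro!: cSup_least)
  ultimately show ?thesis ..
qed (simp add: right_deriv_def)

lemma right_deriv_antimono: "antimono_on {0..1} (right_deriv g)"
proof (intro monotone_onI)
  fix t1 t2 :: real assume t: "t1 \<in> {0..1}" "t2 \<in> {0..1}" "t1 \<le> t2"
  show "right_deriv g t2 \<le> right_deriv g t1"
  proof (cases "t1 < t2 \<and> t2 < 1")
    case True
    then show ?thesis
      using right_deriv_le_chord_slope[of t1 t2] chord_slope_le_right_deriv[of t1 t2] t by auto
  next
    case False
    with t have "t1 = t2 \<or> t2 = 1" by auto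
    then show ?thesis
      using right_deriv_bounds[of t1] t by (auto simp: right_deriv_def)
  qed
qed

lemma tendsto_right_deriv:
  assumes t: "0 \<le> t" "t < 1" and \<delta>: "\<And>n. \<delta> n > 0" "\<delta> \<longlonglongrightarrow> 0"
  shows "(\<lambda>n. chord_slope g t (t + \<delta> n)) \<longlonglongrightarrow> right_deriv g t"
proof (rule LIMSEQ_I)
  fix r :: real assume "0 < r"
  then have "right_deriv g t - r < Sup (chord_slope g t ` {t<..1})"
    using t by (simp add: right_deriv_def)
  then obtain s where s: "t < s" "s \<le> 1" "right_deriv g t - r < chord_slope g t s"
    using less_cSup_iff[OF _ bdd_above_chord_slopes[OF t(1)]] t by auto
  obtain N where N: "\<And>n. n \<ge> N \<Longrightarrow> norm (\<delta> n - 0) < s - t"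
    using LIMSEQ_D[OF \<delta>(2)] s(1) by (metis diff_gt_0_iff_gt)
  have "\<bar>chord_slope g t (t + \<delta> n) - right_deriv g t\<bar> < r" if "n \<ge> N" for n
  proof -
    have "t + \<delta> n < s" using N[OF that] \<delta>(1)[of n] by auto
    then have "chord_slope g t s \<le> chord_slope g t (t + \<delta> n)"
      "chord_slope g t (t + \<delta> n) \<le> right_deriv g t"
      using chord_slope_antimono(1)[of t "t + \<delta> n" s] chord_slope_le_right_deriv[of t "t + \<delta> n"]
        \<delta>(1)[of n] s t by auto
    then show ?thesis using s(3) by linarith
  qed
  then show "\<exists>N. \<forall>n\<ge>N. norm (chord_slope g t (t + \<delta> n) - right_deriv g t) < r"
    by auto
qed

lemma has_real_derivative_right_deriv:
  assumes t: "0 < t" "t < 1" and "isCont (right_deriv g) t"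
  shows "(g has_real_derivative right_deriv g t) (at t)"
  unfolding DERIV_def LIM_eq
proof (intro allI impI)
  fix r :: real assume "0 < r"
  then obtain d where d: "d > 0" "\<And>y. dist y t < d \<Longrightarrow> dist (right_deriv g y) (right_deriv g t) < r"
    using assms(3) unfolding continuous_at_eps_delta by blast
  show "\<exists>s>0. \<forall>h. h \<noteq> 0 \<and> norm (h - 0) < s \<longrightarrow> norm ((g (t + h) - g t) / h - right_deriv g t) < r"
  proof (intro exI[of _ "min d (min t (1 - t))"] conjI allI impI)
    fix h :: real assume h: "h \<noteq> 0 \<and> norm (h - 0) < min d (min t (1 - t))"
    have R: "\<bar>right_deriv g (t + h) - right_deriv g t\<bar> < r"
      using d(2)[of "t + h"] h by (auto simp: dist_real_def)
    consider "h > 0" | "h < 0" using h by linarith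
    then show "norm ((g (t + h) - g t) / h - right_deriv g t) < r"
    proof cases
      case 1
      then have "right_deriv g (t + h) \<le> chord_slope g t (t + h)"
        "chord_slope g t (t + h) \<le> right_deriv g t"
        using right_deriv_le_chord_slope[of t "t + h"] chord_slope_le_right_deriv[of t "t + h"] h t
        by auto
      moreover have "(g (t + h) - g t) / h = chord_slope g t (t + h)" by (simp add: chord_slope_def)
      ultimately show ?thesis using R by auto
    next
      case 2
      then have "right_deriv g t \<le> chord_slope g (t + h) t"
        "chord_slope g (t + h) t \<le> right_deriv g (t + h)"
        using right_deriv_le_chord_slope[of "t + h" t] chord_slope_le_right_deriv[of "t + h" t] h t
        by auto
      moreover have "(g (t + h) - g t) / h = chord_slope g (t + h) t"
        using 2 by (simp add: chord_slope_def divide_simps)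
      ultimately show ?thesis using R by auto
    qed
  qed (use d t in auto)
qed

lemma integrable_right_deriv: "right_deriv g integrable_on {0..1}"
proof -
  have "(\<lambda>t. - right_deriv g t) integrable_on {0..1}"
    by (rule integrable_on_mono_on[OF mono_on_uminus_if_antimono_on[OF right_deriv_antimono]])
  then show ?thesis using integrable_neg by fastforce
qed

lemma integral_right_deriv_less_1:
  assumes u: "0 \<le> u" "u < 1"
  shows "integral {0..u} (right_deriv g) = g u - g 0"
proof -
  define \<delta> where "\<delta> n = (1 - u) / (real n + 1)" for n :: nat
  have \<delta>: "\<And>n. \<delta> n > 0" "\<delta> \<longlonglongrightarrow> 0"
    using u tendsto_mult[OF tendsto_const tendsto_inverse_Suc, of "1 - u"]
    by (auto simp: \<delta>_def[abs_def])
  have \<delta>_le: "\<delta> n \<le> 1 - u" for n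
    using u by (simp add: \<delta>_def divide_simps)
  define q where "q n t = diff_quot g t (\<delta> n)" for n t
  have q_slope: "q n t = chord_slope g t (t + \<delta> n)" for n t
    by (simp add: q_def diff_quot_def chord_slope_def)
  have "(\<lambda>n. integral {0..u} (q n)) \<longlonglongrightarrow> integral {0..u} (right_deriv g)"
  proof (rule dominated_convergence(2)[of q "{0..u}" "\<lambda>_. 1"])
    show "q n integrable_on {0..u}" for n
      unfolding q_def by (rule integrable_on_diff_quot[OF cont]) (use u \<delta> in auto)
    show "norm (q n t) \<le> 1" if "t \<in> {0..u}" for n t
      using chord_slope_bounds[of t "t + \<delta> n"] that \<delta>(1)[of n] \<delta>_le[of n] u
      unfolding q_slope by auto
    show "(\<lambda>n. q n t) \<longlonglongrightarrow> right_deriv g t" if "t \<in> {0..u}" for t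
      unfolding q_slope by (rule tendsto_right_deriv) (use that u \<delta> in auto)
  qed auto
  moreover have "(\<lambda>n. integral {0..u} (q n)) \<longlonglongrightarrow> g u - g 0"
    unfolding q_def by (rule integral_diff_quot_tendsto[OF cont _ \<delta>]) (use u in auto)
  ultimately show ?thesis using LIMSEQ_unique by blast
qed

lemma integral_right_deriv:
  assumes "0 \<le> u" "u \<le> 1"
  shows "integral {0..u} (right_deriv g) = g u - g 0"
proof -
  let ?D = "\<lambda>u. integral {0..u} (right_deriv g) - (g u - g 0)"
  have "continuous_on {0..1} ?D"
    using indefinite_integral_continuous_1[OF integrable_right_deriv] continuous_on_subset[OF cont]
    by (intro continuous_intros) auto
  then have "?D ` closure {0..<1} \<subseteq> {0}"
    by (intro image_closure_subset) (auto simp: integral_right_deriv_less_1)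
  then show ?thesis using assms by (auto simp: image_subset_iff)
qed

end

section \<open>Distribution functions and the decreasing rearrangement\<close>

lemma measure_eq_outside_countable:
  assumes A: "A \<in> sets borel" and N: "countable N" and d: "\<And>x. x \<notin> N \<Longrightarrow> x \<in> A \<longleftrightarrow> x \<in> B"
  shows "B \<in> sets borel" "measure lborel B = measure lborel A"
proof -
  have Nn: "N \<in> null_sets lborel" using countable_imp_null_set_lborel[OF N] .
  have BN: "B \<inter> N \<in> null_sets lborel"
    using countable_imp_null_set_lborel[OF countable_subset[OF _ N], of "B \<inter> N"] by auto
  have eq: "B = (A - N) \<union> (B \<inter> N)" using d by auto
  have "A - N \<in> sets borel" using A Nn by auto
  then show Bs: "B \<in> sets borel" using BN by (subst eq) auto
  have "AE x in lborel. x \<notin> N" using AE_not_in[OF Nn] .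
  then have "AE x in lborel. x \<in> B \<longleftrightarrow> x \<in> A" by eventually_elim (use d in auto)
  then show "measure lborel B = measure lborel A"
    by (rule measure_eq_AE) (use A Bs in auto)
qed

definition level_measure :: "(real \<Rightarrow> real) \<Rightarrow> real \<Rightarrow> real" where
  "level_measure f s = measure lborel {x\<in>{0..1}. f x \<ge> s}"

definition unit_measurable :: "(real \<Rightarrow> real) \<Rightarrow> bool" where
  "unit_measurable f \<longleftrightarrow>
     f \<in> borel_measurable (restrict_space borel {0..1}) \<and> (\<forall>x\<in>{0..1}. 0 \<le> f x \<and> f x \<le> 1)"

lemma sets_level:
  assumes "unit_measurable f"
  shows "{x\<in>{0..1}. s \<le> f x} \<in> sets borel" "{x\<in>{0..1}. s < f x} \<in> sets borel"
proof -
  have m: "f \<in> borel_measurable (restrict_space borel {0..1})" using assms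
    by (simp add: unit_measurable_def)
  have "{x \<in> space (restrict_space borel {0..1}). s \<le> f x} \<in> sets (restrict_space borel {0..1})"
    using m by measurable
  then show "{x\<in>{0..1}. s \<le> f x} \<in> sets borel"
    by (simp add: sets_restrict_space_iff space_restrict_space)
  have "{x \<in> space (restrict_space borel {0..1}). s < f x} \<in> sets (restrict_space borel {0..1})"
    using m by measurable
  then show "{x\<in>{0..1}. s < f x} \<in> sets borel"
    by (simp add: sets_restrict_space_iff space_restrict_space)
qed

lemma fmeasurable_subset_unit:
  assumes "A \<subseteq> {0..1::real}" "A \<in> sets borel"
  shows "A \<in> fmeasurable lborel"
proof -
  have "emeasure lborel A \<le> emeasure lborel {0..1::real}" by (rule emeasure_mono)
    (use assms in auto)
  then have "emeasure lborel A < \<infinity>" by (simp add: le_less_trans)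
  then show ?thesis using assms by (auto simp: fmeasurable_def)
qed

lemma level_measure_bounds: "unit_measurable f \<Longrightarrow> 0 \<le> level_measure f s \<and> level_measure f s \<le> 1"
proof -
  assume f_meas: "unit_measurable f"
  have "measure lborel {x\<in>{0..1}. f x \<ge> s} \<le> measure lborel {0..1::real}"
    by (rule measure_mono_fmeasurable)
      (use sets_level(1)[OF f_meas, of s] fmeasurable_subset_unit[of "{0..1}"] in auto)
  then show ?thesis by (simp add: level_measure_def)
qed

lemma level_measure_nonpos: "unit_measurable f \<Longrightarrow> s \<le> 0 \<Longrightarrow> level_measure f s = 1"
proof -
  assume f_meas: "unit_measurable f" and s: "s \<le> 0"
  have "{x\<in>{0..1}. f x \<ge> s} = {0..1}" using f_meas s by (force simp: unit_measurable_def)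
  then show ?thesis by (simp add: level_measure_def)
qed

lemma level_measure_gt1: "unit_measurable f \<Longrightarrow> s > 1 \<Longrightarrow> level_measure f s = 0"
proof -
  assume f_meas: "unit_measurable f" and s: "s > 1"
  have "{x\<in>{0..1}. f x \<ge> s} = {}" using f_meas s by (force simp: unit_measurable_def)
  then show ?thesis unfolding level_measure_def by (simp only: measure_empty)
qed

lemma level_measure_antimono:
  assumes f_meas: "unit_measurable f" and ss: "s \<le> s'"
  shows "level_measure f s' \<le> level_measure f s"
  unfolding level_measure_def
proof (rule measure_mono_fmeasurable)
  show "{x \<in> {0..1}. s' \<le> f x} \<subseteq> {x \<in> {0..1}. s \<le> f x}" using ss by auto
  show "{x \<in> {0..1}. s' \<le> f x} \<in> sets lborel" using sets_level(1)[OF f_meas, of s'] by simp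
  show "{x \<in> {0..1}. s \<le> f x} \<in> fmeasurable lborel"
    by (rule fmeasurable_subset_unit) (use sets_level(1)[OF f_meas, of s] in auto)
qed

lemma tendsto_level_measure_left:
  assumes "unit_measurable f"
  shows "(\<lambda>n. level_measure f (s - 1 / (real n + 1))) \<longlonglongrightarrow> level_measure f s"
proof -
  define A where "A n = {x\<in>{0..1}. s - 1 / (real n + 1) \<le> f x}" for n :: nat
  have "range A \<subseteq> sets lborel" using sets_level(1)[OF assms] unfolding A_def by auto
  moreover have "decseq A"
  proof (rule decseq_SucI)
    fix n :: nat
    have "1 / (real (Suc n) + 1) \<le> 1 / (real n + 1)" by (simp add: frac_le)
    then show "A (Suc n) \<subseteq> A n" unfolding A_def by auto
  qed
  moreover have "emeasure lborel (A i) \<noteq> \<infinity>" for i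
  proof -
    have "A i \<in> fmeasurable lborel"
      by (rule fmeasurable_subset_unit) (use sets_level(1)[OF assms] in \<open>auto simp: A_def\<close>)
    then show ?thesis by (auto simp: fmeasurable_def)
  qed
  ultimately have "(\<lambda>n. measure lborel (A n)) \<longlonglongrightarrow> measure lborel (\<Inter>i. A i)"
    by (rule Lim_measure_decseq)
  moreover have "(\<Inter>i. A i) = {x\<in>{0..1}. s \<le> f x}"
  proof (intro equalityI subsetI)
    fix x assume x: "x \<in> (\<Inter>i. A i)"
    then have "s - 1 / (real n + 1) \<le> f x" for n by (auto simp: A_def)
    moreover have "(\<lambda>n. s - 1 / (real n + 1)) \<longlonglongrightarrow> s"
      using tendsto_diff[OF tendsto_const tendsto_inverse_Suc, of s] by simp
    ultimately have "s \<le> f x" by (intro LIMSEQ_le_const2) auto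
    then show "x \<in> {x\<in>{0..1}. s \<le> f x}" using x by (auto simp: A_def)
  next
    fix x assume "x \<in> {x\<in>{0..1}. s \<le> f x}"
    moreover have "0 \<le> 1 / (real n + 1)" for n by simp
    ultimately show "x \<in> (\<Inter>i. A i)" unfolding A_def by (auto intro: order_trans[rotated])
  qed
  ultimately show ?thesis by (simp add: level_measure_def A_def)
qed

lemma tendsto_level_measure_right:
  assumes f_meas: "unit_measurable f"
  shows "(\<lambda>n. level_measure f (x + 1 / (real n + 1))) \<longlonglongrightarrow> measure lborel {t\<in>{0..1}. x < f t}"
proof -
  define A where "A n = {t\<in>{0..1}. x + 1 / (real n + 1) \<le> f t}" for n :: nat
  have As: "range A \<subseteq> sets lborel" using sets_level(1)[OF f_meas] unfolding A_def by auto
  have inc: "incseq A"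
  proof (rule incseq_SucI)
    fix n :: nat
    have "1 / (real (Suc n) + 1) \<le> 1 / (real n + 1)" by (simp add: frac_le)
    then show "A n \<subseteq> A (Suc n)" unfolding A_def by auto
  qed
  have U: "(\<Union>i. A i) = {t\<in>{0..1}. x < f t}"
  proof (intro equalityI subsetI)
    fix t assume "t \<in> (\<Union>i. A i)"
    then obtain i where i: "t \<in> A i" by auto
    have "0 < 1 / (real i + 1)" by simp
    moreover have "x + 1 / (real i + 1) \<le> f t" "t \<in> {0..1}" using i unfolding A_def by auto
    ultimately have "x < f t" by linarith
    then show "t \<in> {t\<in>{0..1}. x < f t}" using \<open>t \<in> {0..1}\<close> by auto
  next
    fix t assume t: "t \<in> {t\<in>{0..1}. x < f t}"
    then have "f t - x > 0" by auto
    then obtain n :: nat where n: "1 / real (Suc n) < f t - x" using nat_approx_posE by blast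
    then have "x + 1 / (real n + 1) \<le> f t" by (simp add: add.commute)
    then show "t \<in> (\<Union>i. A i)" using t unfolding A_def by auto
  qed
  have fin: "emeasure lborel (\<Union>i. A i) \<noteq> \<infinity>"
  proof -
    have "(\<Union>i. A i) \<in> fmeasurable lborel" unfolding U by (rule fmeasurable_subset_unit)
      (use sets_level(2)[OF f_meas] in auto)
    then show ?thesis by (auto simp: fmeasurable_def)
  qed
  have "(\<lambda>n. measure lborel (A n)) \<longlonglongrightarrow> measure lborel (\<Union>i. A i)"
    by (rule Lim_measure_incseq[OF As inc fin])
  then show ?thesis unfolding U by (simp add: A_def level_measure_def)
qed

text \<open>The decreasing rearrangement is the generalised inverse of \<open>level_measure f\<close>.\<close>
definition decr_rearr :: "(real \<Rightarrow> real) \<Rightarrow> real \<Rightarrow> real" where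
  "decr_rearr f t = Sup (insert 0 {s\<in>{0..1}. t < level_measure f s})"

lemma decr_rearr_set: "bdd_above (insert 0 {s\<in>{0..1::real}. t < level_measure f s})"
  "insert 0 {s\<in>{0..1::real}. t < level_measure f s} \<noteq> {}"
  by (auto intro!: bdd_aboveI[of _ 1])

lemma decr_rearr_bounds: "0 \<le> decr_rearr f t \<and> decr_rearr f t \<le> 1"
  unfolding decr_rearr_def using decr_rearr_set
  by (auto intro!: cSup_upper2[of 0] cSup_least)

lemma decr_rearr_antimono: "t1 \<le> t2 \<Longrightarrow> decr_rearr f t2 \<le> decr_rearr f t1"
  unfolding decr_rearr_def
  by (rule cSup_subset_mono) (auto intro!: decr_rearr_set)

lemma le_decr_rearr: "0 \<le> s \<Longrightarrow> s \<le> 1 \<Longrightarrow> t < level_measure f s \<Longrightarrow> s \<le> decr_rearr f t"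
  unfolding decr_rearr_def by (rule cSup_upper) (auto intro!: decr_rearr_set)

lemma le_level_measure_if_le_decr_rearr:
  assumes f_meas: "unit_measurable f" and s: "0 < s" and d: "s \<le> decr_rearr f t"
  shows "t \<le> level_measure f s"
proof (rule LIMSEQ_le_const[OF tendsto_level_measure_left[OF f_meas]],
    intro exI allI impI less_imp_le)
  fix n :: nat
  let ?s' = "s - 1 / (real n + 1)"
  have "?s' < s" by simp
  then have "?s' < decr_rearr f t" using d by linarith
  then have "?s' < Sup (insert 0 {s\<in>{0..1}. t < level_measure f s})" by (simp only: decr_rearr_def)
  then obtain x where x: "x \<in> insert 0 {s\<in>{0..1}. t < level_measure f s}" "?s' < x"
    using less_cSup_iff[OF decr_rearr_set(2,1)] by blast
  show "t < level_measure f ?s'"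
  proof (cases "x = 0")
    case True
    have t1: "t < 1"
    proof (rule ccontr)
      assume "\<not> t < 1"
      then have "\<not> t < level_measure f x" for x
        using level_measure_bounds[OF f_meas, of x] by linarith
      then have E: "{s\<in>{0..1}. t < level_measure f s} = {}" by auto
      have "decr_rearr f t = Sup (insert 0 {})" unfolding decr_rearr_def E ..
      then have "decr_rearr f t = 0" by simp
      then show False using s d by auto
    qed
    have "?s' < 0" using x True by auto
    then show ?thesis using level_measure_nonpos[OF f_meas, of ?s'] t1 by auto
  next
    case False
    then have "x \<in> {0..1}" "t < level_measure f x" using x by auto
    then show ?thesis using level_measure_antimono[OF f_meas, of ?s' x] x(2) by auto
  qed
qed

lemma level_measure_decr_rearr:
  assumes f_meas: "unit_measurable f"
  shows "level_measure (decr_rearr f) s = level_measure f s"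
proof -
  let ?A = "{t\<in>{0..1}. s \<le> decr_rearr f t}" and ?m = "level_measure f s"
  consider "s \<le> 0" | "1 < s" | "0 < s" "s \<le> 1" by linarith
  then show ?thesis
  proof cases
    case 1
    then have "?A = {0..1}" using decr_rearr_bounds[of f] by (auto intro: order_trans)
    then show ?thesis using level_measure_nonpos[OF f_meas 1] by (simp add: level_measure_def)
  next
    case 2
    then have "\<not> s \<le> decr_rearr f x" for x using decr_rearr_bounds[of f x] by linarith
    then have "?A = {}" by auto
    then have "level_measure (decr_rearr f) s = 0" by (simp only: level_measure_def measure_empty)
    then show ?thesis using level_measure_gt1[OF f_meas 2] by simp
  next
    case 3
    have m: "0 \<le> ?m" "?m \<le> 1" using level_measure_bounds[OF f_meas] by auto
    have "x \<in> {0..<?m} \<longleftrightarrow> x \<in> ?A" if "x \<notin> {?m}" for x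
    proof
      assume "x \<in> {0..<?m}"
      then show "x \<in> ?A" using le_decr_rearr[of s x f] m 3 by auto
    next
      assume x: "x \<in> ?A"
      then have "x \<le> ?m" using le_level_measure_if_le_decr_rearr[OF f_meas, of s x] 3 by auto
      then show "x \<in> {0..<?m}" using x that by auto
    qed
    then have "measure lborel ?A = measure lborel {0..<?m}"
      using measure_eq_outside_countable(2)[of "{0..<?m}" "{?m}" ?A] by auto
    then show ?thesis using m by (simp add: level_measure_def)
  qed
qed

lemma is_decr_rearr_decr_rearr: "unit_measurable f \<Longrightarrow> is_decr_rearr f (decr_rearr f)"
  using level_measure_decr_rearr[of f] unfolding is_decr_rearr_def level_measure_def[symmetric]
  by (auto intro!: monotone_onI decr_rearr_antimono)

lemma unit_measurable_antimono:
  assumes "antimono_on {0..1} f" "\<And>x. x \<in> {0..1} \<Longrightarrow> 0 \<le> f x \<and> f x \<le> 1"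
  shows "unit_measurable f"
proof -
  have "(\<lambda>x. - f x) \<in> borel_measurable (restrict_space borel {0..1})"
    by (rule borel_measurable_mono_on_fnc[OF mono_on_uminus_if_antimono_on[OF assms(1)]])
  then have "(\<lambda>x. - (- f x)) \<in> borel_measurable (restrict_space borel {0..1})"
    by measurable
  then show ?thesis using assms(2) by (auto simp: unit_measurable_def)
qed

lemma unit_measurable_decr_rearr: "unit_measurable (decr_rearr f)"
  by (rule unit_measurable_antimono)
    (auto intro!: monotone_onI simp: decr_rearr_antimono decr_rearr_bounds)

lemma borel_measurable_restrict_lborel:
  "h \<in> borel_measurable (restrict_space borel {0..1::real}) \<Longrightarrow> h \<in> borel_measurable
    (restrict_space lborel {0..1::real})"
  by (subst measurable_cong_sets[OF sets_restrict_space_cong[OF sets_lborel] refl]) auto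

lemma integral_restrict_lborel:
  fixes h :: "real \<Rightarrow> real"
  assumes m: "h \<in> borel_measurable (restrict_space borel {0..1})"
    and b: "\<And>x. x \<in> {0..1} \<Longrightarrow> \<bar>h x\<bar> \<le> B"
  shows "h integrable_on {0..1}" "integral {0..1} h = integral\<^sup>L (restrict_space lborel {0..1}) h"
proof -
  have m2: "h \<in> borel_measurable (restrict_space lborel {0..1})" using
    borel_measurable_restrict_lborel[OF m] .
  have mi: "(\<lambda>x. indicator {0..1} x *\<^sub>R h x) \<in> borel_measurable lborel"
    using m2 by (subst borel_measurable_restrict_space_iff[symmetric]) auto
  have si: "set_integrable lborel {0..1} h"
    unfolding set_integrable_def
    by (rule integrableI_bounded_set[where A="{0..1}" and B=B])
      (use mi b in \<open>auto simp: indicator_def\<close>)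
  show "h integrable_on {0..1}" using set_borel_integral_eq_integral(1)[OF si] .
  have "integral\<^sup>L (restrict_space lborel {0..1}) h = integral\<^sup>L lborel
    (\<lambda>x. indicator {0..1} x *\<^sub>R h x)"
    by (rule integral_restrict_space) auto
  also have "\<dots> = (LINT x : {0..1} | lborel. h x)" by (simp add: set_lebesgue_integral_def)
  also have "\<dots> = integral {0..1} h" using set_borel_integral_eq_integral(2)[OF si] .
  finally show "integral {0..1} h = integral\<^sup>L (restrict_space lborel {0..1}) h" by simp
qed

lemma distr_eq_if_level_measure_eq:
  assumes f_meas: "unit_measurable f" and g_meas: "unit_measurable g"
    and L: "\<And>s. level_measure f s = level_measure g s"
  shows "distr (restrict_space lborel {0..1}) borel f
    = distr (restrict_space lborel {0..1}) borel g"
proof -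
  let ?M = "restrict_space lborel {0..1::real}"
  have mf: "f \<in> borel_measurable ?M" using f_meas borel_measurable_restrict_lborel
    by (auto simp: unit_measurable_def)
  have mg: "g \<in> borel_measurable ?M" using g_meas borel_measurable_restrict_lborel
    by (auto simp: unit_measurable_def)
  have em: "emeasure (distr ?M borel h) {x<..} = emeasure lborel {t\<in>{0..1}. x < h t}"
    if "h \<in> borel_measurable ?M" for h :: "real \<Rightarrow> real" and x :: real
  proof -
    have "emeasure (distr ?M borel h) {x<..} = emeasure ?M (h -` {x<..} \<inter> space ?M)"
      by (rule emeasure_distr[OF that]) measurable
    also have "\<dots> = emeasure lborel (h -` {x<..} \<inter> {0..1})"
      unfolding space_restrict_space space_lborel space_borel Int_UNIV_right
      by (rule emeasure_restrict_space) auto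
    also have "h -` {x<..} \<inter> {0..1} = {t\<in>{0..1}. x < h t}" by auto
    finally show ?thesis .
  qed
  have fin: "emeasure lborel {t\<in>{0..1}. x < h t} = ennreal (measure lborel {t\<in>{0..1}. x < h t})"
    if "unit_measurable h" for h :: "real \<Rightarrow> real" and x :: real
  proof -
    have "{t\<in>{0..1}. x < h t} \<in> fmeasurable lborel" by (rule fmeasurable_subset_unit)
      (use sets_level(2)[OF that] in auto)
    then show ?thesis by (simp add: emeasure_eq_measure2)
  qed
  have meq: "measure lborel {t\<in>{0..1}. x < f t} = measure lborel {t\<in>{0..1}. x < g t}" for x
    using LIMSEQ_unique[OF tendsto_level_measure_right[OF f_meas, of x]]
      tendsto_level_measure_right[OF g_meas, of x] L by simp
  show ?thesis
  proof (rule measure_eqI_lessThan)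
    show "sets (distr ?M borel f) = sets borel" "sets (distr ?M borel g) = sets borel" by auto
    show "emeasure (distr ?M borel f) {x<..} < \<infinity>" for x
      unfolding em[OF mf] fin[OF f_meas] by simp
    show "emeasure (distr ?M borel f) {x<..} = emeasure (distr ?M borel g) {x<..}" for x
      unfolding em[OF mf] em[OF mg] fin[OF f_meas] fin[OF g_meas] meq ..
  qed
qed

lemma integral_comp_eq_if_level_measure_eq:
  fixes \<phi> :: "real \<Rightarrow> real"
  assumes f_meas: "unit_measurable f" and g_meas: "unit_measurable g"
    and L: "\<And>s. level_measure f s = level_measure g s"
    and \<phi>: "continuous_on UNIV \<phi>"
  shows "(\<lambda>x. \<phi> (f x)) integrable_on {0..1}" "(\<lambda>x. \<phi> (g x)) integrable_on {0..1}"
    "integral {0..1} (\<lambda>x. \<phi> (f x)) = integral {0..1} (\<lambda>x. \<phi> (g x))"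
proof -
  let ?M = "restrict_space lborel {0..1::real}"
  have \<phi>m: "\<phi> \<in> borel_measurable borel" by (rule borel_measurable_continuous_onI[OF \<phi>])
  obtain B where B: "\<And>y. y \<in> {0..1} \<Longrightarrow> \<bar>\<phi> y\<bar> \<le> B"
  proof -
    have "compact (\<phi> ` {0..1::real})"
      by (rule compact_continuous_image) (use \<phi> continuous_on_subset in auto)
    then obtain B where "\<forall>y\<in>\<phi> ` {0..1}. norm y \<le> B" using compact_imp_bounded bounded_iff by metis
    then show ?thesis using that by force
  qed
  have hb: "(\<lambda>x. \<phi> (h x)) \<in> borel_measurable (restrict_space borel {0..1})"
    if "h \<in> borel_measurable (restrict_space borel {0..1})" for h
    using \<phi>m that by measurable
  have I: "(\<lambda>x. \<phi> (h x)) integrable_on {0..1} \<and>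
      integral {0..1} (\<lambda>x. \<phi> (h x)) = integral\<^sup>L (distr ?M borel h) \<phi>"
    if h_meas: "unit_measurable h" for h
  proof -
    have m: "h \<in> borel_measurable (restrict_space borel {0..1})"
      and hb01: "\<And>x. x \<in> {0..1} \<Longrightarrow> h x \<in> {0..1}"
      using h_meas by (auto simp: unit_measurable_def)
    have bd: "\<And>x. x \<in> {0..1} \<Longrightarrow> \<bar>\<phi> (h x)\<bar> \<le> B" using B hb01 by auto
    have "integral {0..1} (\<lambda>x. \<phi> (h x)) = integral\<^sup>L ?M (\<lambda>x. \<phi> (h x))"
      using integral_restrict_lborel(2)[OF hb[OF m] bd] .
    also have "\<dots> = integral\<^sup>L (distr ?M borel h) \<phi>"
      by (rule integral_distr[symmetric]) (use borel_measurable_restrict_lborel[OF m] \<phi>m in auto)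
    finally show ?thesis using integral_restrict_lborel(1)[OF hb[OF m] bd] by simp
  qed
  show "(\<lambda>x. \<phi> (f x)) integrable_on {0..1}" "(\<lambda>x. \<phi> (g x)) integrable_on {0..1}"
    using I[OF f_meas] I[OF g_meas] by auto
  show "integral {0..1} (\<lambda>x. \<phi> (f x)) = integral {0..1} (\<lambda>x. \<phi> (g x))"
    using I[OF f_meas] I[OF g_meas] distr_eq_if_level_measure_eq[OF f_meas g_meas L] by simp
qed

lemma integrable_unit_measurable: "unit_measurable f \<Longrightarrow> f integrable_on {0..1}"
  by (rule integral_restrict_lborel(1)[of f 1]) (auto simp: unit_measurable_def)

lemma integrable_unit_measurable_sub: "unit_measurable f \<Longrightarrow> 0 \<le> a \<Longrightarrow> b \<le> 1 \<Longrightarrow> f integrable_on {a..b}"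
  using integrable_on_subinterval[OF integrable_unit_measurable] by auto

lemma has_real_derivative_indefinite_integral:
  assumes p_meas: "unit_measurable p" and x: "0 < x" "x < 1" and c: "isCont p x"
  shows "((\<lambda>y. integral {0..y} p) has_real_derivative p x) (at x)"
proof -
  have "((\<lambda>y. integral {0..y} p) has_vector_derivative p x) (at x within ({0..1} - {}))"
    by (rule integral_has_vector_derivative_continuous_at[OF integrable_unit_measurable[OF p_meas]])
       (use x c continuous_at_imp_continuous_within in auto)
  moreover have "at x within ({0..1} - {}) = at x" by (rule at_within_interior) (use x in auto)
  ultimately show ?thesis by (simp add: has_real_derivative_iff_has_vector_derivative)
qed

lemma level_measure_eq_if_integrals_eq:
  assumes p_meas: "unit_measurable p" and q_meas: "unit_measurable q"
    and ap: "antimono_on {0..1} p" and aq: "antimono_on {0..1} q"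
    and I: "\<And>x. 0 < x \<Longrightarrow> x < 1 \<Longrightarrow> integral {0..x} p = integral {0..x} q"
  shows "level_measure p s = level_measure q s"
proof -
  define N where "N = {t \<in> {0<..<1}. \<not> isCont p t} \<union> {t \<in> {0<..<1}. \<not> isCont q t} \<union> {0, 1}"
  have N: "countable N" unfolding N_def using antimono_ctble_discont[OF ap]
    antimono_ctble_discont[OF aq] by auto
  have eq: "p x = q x" if "x \<in> {0..1}" "x \<notin> N" for x
  proof -
    have x: "0 < x" "x < 1" "isCont p x" "isCont q x" using that by (auto simp: N_def)
    have dp: "((\<lambda>y. integral {0..y} p) has_real_derivative p x) (at x)"
      by (rule has_real_derivative_indefinite_integral[OF p_meas x(1,2,3)])
    have dq: "((\<lambda>y. integral {0..y} q) has_real_derivative q x) (at x)"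
      by (rule has_real_derivative_indefinite_integral[OF q_meas x(1,2,4)])
    have "((\<lambda>y. integral {0..y} q) has_real_derivative p x) (at x)"
      by (rule has_field_derivative_transform_within_open[OF dp, of "{0<..<1}"]) (use x I in auto)
    then show ?thesis using dq DERIV_unique by blast
  qed
  have "{x\<in>{0..1}. s \<le> p x} \<in> sets borel" using sets_level(1)[OF p_meas] .
  then have "measure lborel {x\<in>{0..1}. s \<le> q x} = measure lborel {x\<in>{0..1}. s \<le> p x}"
    by (rule measure_eq_outside_countable(2)[OF _ N]) (use eq in auto)
  then show ?thesis by (simp add: level_measure_def)
qed

text \<open>With \<open>s\<^sub>0 = f\<^sup>*(b - a)\<close>: \<open>f \<le> (f - s\<^sub>0)\<^sup>+ + s\<^sub>0\<close>, and \<open>(f - s\<^sub>0)\<^sup>+\<close> is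
  equimeasurable with \<open>(f\<^sup>* - s\<^sub>0)\<^sup>+\<close>, which vanishes beyond \<open>b - a\<close>.\<close>
lemma hardy_littlewood:
  assumes f_meas: "unit_measurable f" and ab: "0 \<le> a" "a \<le> b" "b \<le> 1"
  shows "integral {a..b} f \<le> integral {0..b-a} (decr_rearr f)"
proof -
  define c where "c = b - a"
  have c: "0 \<le> c" "c \<le> 1" using ab by (auto simp: c_def)
  define s0 where "s0 = decr_rearr f c"
  define \<phi> where "\<phi> y = max (y - s0) 0" for y :: real
  have \<phi>c: "continuous_on UNIV \<phi>" unfolding \<phi>_def by (intro continuous_intros)
  have L: "level_measure f s = level_measure (decr_rearr f) s" for s
    using level_measure_decr_rearr[OF f_meas] by simp
  note E = integral_comp_eq_if_level_measure_eq[OF f_meas unit_measurable_decr_rearr L \<phi>c]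
  have fi: "f integrable_on {a..b}" using integrable_unit_measurable_sub[OF f_meas] ab by auto
  have \<phi>fi: "(\<lambda>x. \<phi> (f x)) integrable_on {a..b}" using integrable_on_subinterval[OF E(1)] ab by auto
  have "integral {a..b} f \<le> integral {a..b} (\<lambda>x. \<phi> (f x) + s0)"
    by (rule integral_le[OF fi])
      (use integrable_add[OF \<phi>fi integrable_const_ivl[of s0 a b]] in \<open>auto simp: \<phi>_def\<close>)
  also have "\<dots> = integral {a..b} (\<lambda>x. \<phi> (f x)) + s0 * c"
    using integral_add[OF \<phi>fi integrable_const_ivl[of s0 a b]] ab by (simp add: c_def mult.commute)
  also have "integral {a..b} (\<lambda>x. \<phi> (f x)) \<le> integral {0..1} (\<lambda>x. \<phi> (f x))"
    by (rule integral_subset_le) (use ab \<phi>fi E(1) in \<open>auto simp: \<phi>_def\<close>)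
  also have "integral {0..1} (\<lambda>x. \<phi> (f x)) = integral {0..1} (\<lambda>x. \<phi> (decr_rearr f x))"
    by (rule E(3))
  also have "\<dots> = integral {0..c} (\<lambda>x. \<phi> (decr_rearr f x))
      + integral {c..1} (\<lambda>x. \<phi> (decr_rearr f x))"
    using Henstock_Kurzweil_Integration.integral_combine[of 0 c 1 "\<lambda>x. \<phi> (decr_rearr f x)"] c E(2)
    by auto
  also have "integral {c..1} (\<lambda>x. \<phi> (decr_rearr f x)) = integral {c..1} (\<lambda>x. 0)"
    by (rule integral_cong) (auto simp: \<phi>_def s0_def decr_rearr_antimono)
  also have "integral {0..c} (\<lambda>x. \<phi> (decr_rearr f x)) = integral {0..c} (\<lambda>x. decr_rearr f x - s0)"
    by (rule integral_cong) (auto simp: \<phi>_def s0_def decr_rearr_antimono)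
  also have "integral {0..c} (\<lambda>x. decr_rearr f x - s0) = integral {0..c} (decr_rearr f) - s0 * c"
    using integral_diff[OF integrable_unit_measurable_sub[OF unit_measurable_decr_rearr, of 0 c f]
      integrable_const_ivl[of s0 0 c]] c by (simp add: mult.commute)
  finally show ?thesis by (simp add: c_def)
qed

lemma emeasure_lborel_reflect:
  assumes B: "B \<in> sets borel"
  shows "emeasure lborel {x::real. 1 - x \<in> B} = emeasure lborel B"
proof -
  have pm: "((+) (1::real)) \<in> borel_measurable borel"
    by (intro borel_measurable_continuous_onI continuous_intros)
  have C: "(+) 1 -` B \<in> sets borel" using measurable_sets_borel[OF pm B] .
  have "emeasure lborel (uminus -` ((+) 1 -` B)) = emeasure (distr lborel borel uminus)
    ((+) 1 -` B)"
    by (subst emeasure_distr) (use C in auto)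
  also have "\<dots> = emeasure lborel ((+) (1::real) -` B)" by (simp add: lborel_distr_uminus)
  also have "\<dots> = emeasure (distr lborel borel ((+) (1::real))) B"
    by (subst emeasure_distr) (use B in auto)
  also have "\<dots> = emeasure lborel B" by (simp add: lborel_distr_plus)
  finally show ?thesis by (simp add: vimage_def)
qed

lemma level_measure_reflect:
  assumes "{y\<in>{0..1}. s \<le> f y} \<in> sets borel"
  shows "level_measure (\<lambda>t. f (1 - t)) s = level_measure f s"
proof -
  have eq: "{x\<in>{0..1}. s \<le> f (1 - x)} = {x. 1 - x \<in> {y\<in>{0..1}. s \<le> f y}}" by auto
  show ?thesis unfolding level_measure_def measure_def eq emeasure_lborel_reflect[OF assms] ..
qed

lemma level_measure_eq_if_eq_on_interior:
  assumes "unit_measurable f" and eq: "\<And>t. t \<in> {0<..<1} \<Longrightarrow> h t = f t"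
  shows "{x\<in>{0..1}. s \<le> h x} \<in> sets borel" "level_measure h s = level_measure f s"
proof -
  have d: "x \<in> {x\<in>{0..1}. s \<le> f x} \<longleftrightarrow> x \<in> {x\<in>{0..1}. s \<le> h x}" if "x \<notin> {0, 1}" for x
    using eq[of x] that by auto
  note m = measure_eq_outside_countable[of _ "{0, 1}", OF sets_level(1)[OF assms(1)] _ d]
  show "{x\<in>{0..1}. s \<le> h x} \<in> sets borel" by (rule m(1)) simp
  show "level_measure h s = level_measure f s"
    unfolding level_measure_def by (rule m(2)) simp
qed

lemma is_decr_rearr_cong:
  "(\<And>s. level_measure h s = level_measure f s) \<Longrightarrow> is_decr_rearr h r \<longleftrightarrow> is_decr_rearr f r"
  unfolding is_decr_rearr_def level_measure_def[symmetric] by simp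

lemma decr_rearr_cong:
  "(\<And>s. level_measure f s = level_measure g s) \<Longrightarrow> decr_rearr f = decr_rearr g"
  by (simp add: decr_rearr_def fun_eq_iff)

lemma is_decr_rearr_self: "antimono_on {0..1} f \<Longrightarrow> is_decr_rearr f f"
  by (simp add: is_decr_rearr_def)

lemma integral_eq_if_level_measure_eq:
  "unit_measurable f \<Longrightarrow> unit_measurable g \<Longrightarrow> (\<And>s. level_measure f s = level_measure g s) \<Longrightarrow>
    integral {0..1} f = integral {0..1} g"
  using integral_comp_eq_if_level_measure_eq(3)[of f g "\<lambda>y. y"] by simp

section \<open>Partial derivatives of copulas\<close>

text \<open>Taking the partial derivative of the clamped extension makes it independent of the values
  of \<open>D\<close> off the unit square and jointly measurable in \<open>(t, v)\<close>.\<close>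
definition section_d1 :: "(real \<Rightarrow> real \<Rightarrow> real) \<Rightarrow> real \<Rightarrow> real \<Rightarrow> real" where
  "section_d1 D v t = d1 (copula_ext D) t v"

lemma d1_eq_section_d1:
  assumes "t \<in> {0<..<1}" "v \<in> {0..1}"
  shows "d1 D t v = section_d1 D v t"
  unfolding section_d1_def by (rule d1_cong_open[of "{0<..<1}"])
    (use assms in \<open>auto simp: copula_ext_eq\<close>)

lemma section_d1_bounds:
  assumes "copula D"
  shows "0 \<le> section_d1 D v t \<and> section_d1 D v t \<le> 1"
proof (cases "\<exists>X. ((\<lambda>s. copula_ext D s v) has_real_derivative X) (at t)")
  case True
  then obtain X where X: "((\<lambda>s. copula_ext D s v) has_real_derivative X) (at t)" by blast
  let ?q = "\<lambda>n. diff_quot (\<lambda>s. copula_ext D s v) t (1 / (real n + 1))"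
  have "0 \<le> diff_quot (\<lambda>s. copula_ext D s v) t h \<and> diff_quot (\<lambda>s. copula_ext D s v) t h \<le> 1"
    if "h > 0" for h
    using copula_ext_mono1[OF assms, of t "t + h" v]
      copula_ext_increment1_le[OF assms, of t "t + h" v]
      that by (simp add: diff_quot_def divide_le_eq_1_pos)
  then have "0 \<le> ?q n \<and> ?q n \<le> 1" for n by simp
  moreover have "?q \<longlonglongrightarrow> X"
    by (rule tendsto_diff_quot[OF X tendsto_inverse_Suc]) simp
  ultimately have "0 \<le> X \<and> X \<le> 1"
    using LIMSEQ_le_const[of ?q X 0] LIMSEQ_le_const2[of ?q X 1] by auto
  then show ?thesis
    unfolding section_d1_def d1_eqI[where F="copula_ext D" and w=v, OF X] .
qed (simp add: section_d1_def d1_def)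

lemma borel_measurable_section_d1_pair:
  "copula D \<Longrightarrow> (\<lambda>z. section_d1 D (snd z) (fst z)) \<in> borel_measurable borel"
  unfolding section_d1_def by (rule borel_measurable_d1[OF continuous_on_copula_ext])

lemma borel_measurable_section_d1:
  assumes "copula D"
  shows "section_d1 D v \<in> borel_measurable borel"
proof -
  have "(\<lambda>t::real. (t, v)) \<in> borel \<rightarrow>\<^sub>M borel" by measurable
  from measurable_compose[OF this borel_measurable_section_d1_pair[OF assms]] show ?thesis
    by (simp add: o_def)
qed

lemma unit_measurable_section_d1: "copula D \<Longrightarrow> unit_measurable (section_d1 D v)"
  unfolding unit_measurable_def
  using section_d1_bounds measurable_restrict_space1[OF borel_measurable_section_d1] by auto

lemma level_measure_d1:
  assumes "copula D" "v \<in> {0..1}"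
  shows "{t\<in>{0..1}. s \<le> d1 D t v} \<in> sets borel"
    and "level_measure (\<lambda>t. d1 D t v) s = level_measure (section_d1 D v) s"
  using level_measure_eq_if_eq_on_interior[OF unit_measurable_section_d1[OF assms(1)],
      of "\<lambda>t. d1 D t v"] d1_eq_section_d1[OF _ assms(2)] by auto

text \<open>The Fatou-type inequalities on \<open>[0, u]\<close> and on \<open>[u, 1]\<close> add up to the hypothesis, so both
  are equalities.\<close>
lemma copula_eq_integral_section_d1:
  assumes D: "copula D" and v: "v \<in> {0..1}" and u: "u \<in> {0..1}"
    and total: "integral {0..1} (section_d1 D v) = v"
  shows "D u v = integral {0..u} (section_d1 D v)"
proof -
  have "mono (\<lambda>s. copula_ext D s v)" by (rule monoI) (rule copula_ext_mono1[OF D])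
  note F = integral_d1_le_increment[OF continuous_on_copula_ext1[OF D] this
      borel_measurable_section_d1[OF D, unfolded section_d1_def[abs_def]]
      section_d1_bounds[OF D, unfolded section_d1_def]]
  have "integral {0..u} (section_d1 D v) \<le> D u v - D 0 v"
    using F(2)[of 0 u] u v by (simp add: section_d1_def[abs_def] copula_ext_eq)
  moreover have "integral {u..1} (section_d1 D v) \<le> D 1 v - D u v"
    using F(2)[of u 1] u v by (simp add: section_d1_def[abs_def] copula_ext_eq)
  moreover have "integral {0..u} (section_d1 D v) + integral {u..1} (section_d1 D v) = v"
    using Henstock_Kurzweil_Integration.integral_combine[of 0 u 1 "section_d1 D v"] u total
      integrable_unit_measurable[OF unit_measurable_section_d1[OF D]] by auto
  ultimately show ?thesis using copula_0v[OF D v] copula_1v[OF D v] by linarith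
qed

section \<open>Reflection of a copula in its first argument\<close>

definition copula_reflect :: "(real \<Rightarrow> real \<Rightarrow> real) \<Rightarrow> real \<Rightarrow> real \<Rightarrow> real" where
  "copula_reflect D u v = v - D (1 - u) v"

lemma copula_reflect_reflect [simp]: "copula_reflect (copula_reflect D) = D"
  by (simp add: copula_reflect_def fun_eq_iff)

lemma copula_copula_reflect:
  assumes D: "copula D"
  shows "copula (copula_reflect D)"
  unfolding copula_def
proof (intro conjI ballI impI)
  fix u v :: real assume u: "u \<in> {0..1}" and v: "v \<in> {0..1}"
  have "D (1 - u) v \<le> D 1 v" by (rule copula_mono1[OF D]) (use u v in auto)
  then show "copula_reflect D u v \<in> {0..1}"
    using copula_range[OF D, of "1 - u" v] copula_1v[OF D v] u v by (auto simp: copula_reflect_def)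
next
  fix u :: real assume u: "u \<in> {0..1}"
  show "copula_reflect D u 0 = 0" "copula_reflect D 0 u = 0" "copula_reflect D u 1 = u"
    "copula_reflect D 1 u = u"
    using copula_u0[OF D, of "1 - u"] copula_1v[OF D u] copula_u1[OF D, of "1 - u"]
      copula_0v[OF D u] u
    by (simp_all add: copula_reflect_def)
next
  fix u1 u2 v1 v2 :: real
  assume "u1 \<in> {0..1}" "u2 \<in> {0..1}" "v1 \<in> {0..1}" "v2 \<in> {0..1}" "u1 \<le> u2" "v1 \<le> v2"
  then have "0 \<le> D (1 - u1) v2 - D (1 - u1) v1 - D (1 - u2) v2 + D (1 - u2) v1"
    by (intro copula_rect[OF D]) auto
  then show "0 \<le> copula_reflect D u2 v2 - copula_reflect D u2 v1 - copula_reflect D u1 v2 +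
    copula_reflect D u1 v1"
    by (simp add: copula_reflect_def)
qed

lemma has_real_derivative_copula_reflect:
  assumes "((\<lambda>s. F s v) has_real_derivative X) (at (1 - t))"
  shows "((\<lambda>s. copula_reflect F s v) has_real_derivative X) (at t)"
proof -
  have "((\<lambda>s. F (1 - s) v) has_real_derivative X * (-1)) (at t)"
    by (rule DERIV_chain2[where f="\<lambda>s. F s v" and g="\<lambda>s. 1 - s", OF assms])
      (auto intro!: derivative_eq_intros)
  then have "((\<lambda>s. v - F (1 - s) v) has_real_derivative 0 - X * (-1)) (at t)"
    by (intro derivative_intros)
  then show ?thesis by (simp add: copula_reflect_def)
qed

lemma d1_copula_reflect: "d1 (copula_reflect F) t v = d1 F (1 - t) v"
proof (cases "\<exists>X. ((\<lambda>s. F s v) has_real_derivative X) (at (1 - t))")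
  case True
  then obtain X where X: "((\<lambda>s. F s v) has_real_derivative X) (at (1 - t))" by blast
  show ?thesis
    using d1_eqI[where F=F and w=v, OF X]
      d1_eqI[where F="copula_reflect F" and w=v,
        OF has_real_derivative_copula_reflect[where F=F and v=v, OF X]]
    by simp
next
  case False
  have "\<not> (\<exists>X. ((\<lambda>s. copula_reflect F s v) has_real_derivative X) (at t))"
    using False has_real_derivative_copula_reflect[where F="copula_reflect F" and t="1 - t"] by auto
  then show ?thesis using False by (simp add: d1_def)
qed

lemma level_measure_d1_copula_reflect:
  assumes "copula D" "v \<in> {0..1}"
  shows "level_measure (\<lambda>t. d1 (copula_reflect D) t v) s = level_measure (\<lambda>t. d1 D t v) s"
  unfolding d1_copula_reflect by (rule level_measure_reflect[OF level_measure_d1(1)[OF assms]])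

lemma level_measure_section_d1_copula_reflect:
  assumes "copula D" "v \<in> {0..1}"
  shows "level_measure (section_d1 (copula_reflect D) v) s = level_measure (section_d1 D v) s"
  using level_measure_d1(2)[OF copula_copula_reflect[OF assms(1)] assms(2)]
    level_measure_d1(2)[OF assms] level_measure_d1_copula_reflect[OF assms] by simp

lemma SI_copula_reflect:
  assumes "SD D"
  shows "SI (copula_reflect D)"
  unfolding SI_def concave_on_iff
proof (intro ballI conjI allI impI)
  fix v x y a b :: real
  assume "v \<in> {0..1}" "x \<in> {0..1}" "y \<in> {0..1}" and ab: "0 \<le> a" "0 \<le> b" "a + b = 1"
  with assms have "D (a *\<^sub>R (1 - x) + b *\<^sub>R (1 - y)) v \<le> a * D (1 - x) v + b * D (1 - y) v"
    by (auto simp: SD_def convex_on_def)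
  moreover have "a *\<^sub>R (1 - x) + b *\<^sub>R (1 - y) = 1 - (a *\<^sub>R x + b *\<^sub>R y)" "v = a * v + b * v"
    using ab by (simp_all add: algebra_simps flip: distrib_right)
  ultimately show "a * copula_reflect D x v + b * copula_reflect D y v
      \<le> copula_reflect D (a *\<^sub>R x + b *\<^sub>R y) v"
    unfolding copula_reflect_def by (simp add: algebra_simps)
qed simp

lemma integral_reflect_unit:
  fixes h :: "real \<Rightarrow> real"
  shows "integral {0..1} (\<lambda>u. h (1 - u)) = integral {0..1} h"
proof -
  have "(\<lambda>x. h (- x + 1)) = (\<lambda>u. h (1 - u))" by (simp add: fun_eq_iff)
  then have "integral {0..1} (\<lambda>u. h (1 - u)) = integral {-1..0} (\<lambda>y. h (y + 1))"
    using Henstock_Kurzweil_Integration.integral_reflect_real[of 0 "-1" "\<lambda>y. h (y + 1)"] by simp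
  also have "\<dots> = integral {0 - 1..1 - 1} (\<lambda>y. h (y + 1))" by simp
  also have "\<dots> = integral {0..1} h" by (rule integral_shift_real_ivl)
  finally show ?thesis .
qed

lemma d1S_le_copula_reflect:
  assumes "copula D" "copula E" "d1S_le D E"
  shows "d1S_le (copula_reflect D) (copula_reflect E)"
  unfolding d1S_le_def schur_le_def
proof (intro ballI conjI allI impI)
  fix v x :: real and fs gs :: "real \<Rightarrow> real"
  assume v: "v \<in> {0..1}" and x: "x \<in> {0<..<1}"
    and fs: "is_decr_rearr (\<lambda>t. d1 (copula_reflect D) t v) fs"
    and gs: "is_decr_rearr (\<lambda>t. d1 (copula_reflect E) t v) gs"
  have "is_decr_rearr (\<lambda>t. d1 (copula_reflect F) t v) r \<longleftrightarrow> is_decr_rearr (\<lambda>t. d1 F t v) r"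
    if "copula F" for F r
    by (rule is_decr_rearr_cong[OF level_measure_d1_copula_reflect[OF that v]])
  then show "integral {0..x} fs \<le> integral {0..x} gs"
    using fs gs x v assms unfolding d1S_le_def schur_le_def by blast
next
  fix v :: real assume "v \<in> {0..1}"
  then show "integral {0..1} (\<lambda>t. d1 (copula_reflect D) t v)
      = integral {0..1} (\<lambda>t. d1 (copula_reflect E) t v)"
    using assms integral_reflect_unit[of "\<lambda>t. d1 D t v"] integral_reflect_unit[of "\<lambda>t. d1 E t v"]
    unfolding d1S_le_def schur_le_def d1_copula_reflect by auto
qed

lemma incr_rearranged_copula_reflect:
  assumes "copula C" "decr_rearranged C Cd"
  shows "incr_rearranged (copula_reflect C) (copula_reflect Cd)"
  using assms d1S_le_copula_reflect SI_copula_reflect copula_copula_reflect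
  unfolding incr_rearranged_def decr_rearranged_def d1S_eq_def by blast

section \<open>Increasing rearrangements\<close>

lemma concave_on_cong:
  assumes "concave_on S f" "\<And>x. x \<in> S \<Longrightarrow> g x = f x"
  shows "concave_on S g"
  using assms convexD[of S] unfolding concave_on_iff by (auto simp del: scaleR_conv_of_real)

lemma concave_lipschitz01_copula_ext:
  assumes E: "copula E" and "SI E" and v: "v \<in> {0..1}"
  shows "concave_lipschitz01 (\<lambda>s. copula_ext E s v)"
proof
  show "concave_on {0..1} (\<lambda>s. copula_ext E s v)"
    by (rule concave_on_cong[of _ "\<lambda>u. E u v"]) (use assms in \<open>auto simp: SI_def copula_ext_eq\<close>)
qed (use copula_ext_mono1[OF E] copula_ext_increment1_le[OF E] continuous_on_copula_ext1[OF E]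
    in auto)

text \<open>The concave section is differentiable at every continuity point of its decreasing right
  derivative, i.e. outside a countable set.\<close>
lemma SI_copula_section:
  assumes E: "copula E" and SI: "SI E" and v: "v \<in> {0..1}"
  defines "R \<equiv> right_deriv (\<lambda>s. copula_ext E s v)"
  shows "antimono_on {0..1} R" and "unit_measurable R"
    and "level_measure (section_d1 E v) s = level_measure R s"
    and "u \<in> {0..1} \<Longrightarrow> E u v = integral {0..u} R"
proof -
  interpret concave_lipschitz01 "\<lambda>s. copula_ext E s v"
    by (rule concave_lipschitz01_copula_ext[OF E SI v])
  show anti: "antimono_on {0..1} R" unfolding R_def by (rule right_deriv_antimono)
  show um: "unit_measurable R"
    unfolding R_def
    by (rule unit_measurable_antimono[OF right_deriv_antimono]) (use right_deriv_bounds in auto)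
  define N where "N = {t \<in> {0<..<1}. \<not> isCont R t} \<union> {0, 1}"
  have "countable N" using antimono_ctble_discont[OF anti] by (simp add: N_def)
  moreover have "section_d1 E v t = R t" if "t \<in> {0..1}" "t \<notin> N" for t
    unfolding section_d1_def R_def
    by (rule d1_eqI[where F="copula_ext E" and w=v, OF has_real_derivative_right_deriv])
      (use that in \<open>auto simp: N_def R_def\<close>)
  ultimately show "level_measure (section_d1 E v) s = level_measure R s"
    unfolding level_measure_def
    by (intro measure_eq_outside_countable(2)[OF sets_level(1)[OF um]]) auto
  show "E u v = integral {0..u} R" if "u \<in> {0..1}"
    using integral_right_deriv[of u] that v copula_0v[OF E v] unfolding R_def
    by (simp add: copula_ext_eq)
qed

lemma d1S_eq_integral_rearr_eq:
  assumes "d1S_eq E C" "v \<in> {0..1}" "x \<in> {0<..<1}"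
    and "is_decr_rearr (\<lambda>t. d1 E t v) fs" "is_decr_rearr (\<lambda>t. d1 C t v) gs"
  shows "integral {0..x} fs = integral {0..x} gs"
  using assms unfolding d1S_eq_def d1S_le_def schur_le_def by (meson order_antisym)

text \<open>Both \<open>\<partial>\<^sub>1E(\<cdot>, v)\<^sup>*\<close>, here the right derivative \<open>R\<close> of the concave section, and
  \<open>\<partial>\<^sub>1C(\<cdot>, v)\<^sup>*\<close> are decreasing; equal partial integrals force them to agree at all common
  continuity points, hence to be equimeasurable.\<close>
lemma incr_rearranged_eq_integral_decr_rearr:
  assumes C: "copula C" and up: "incr_rearranged C E" and v: "v \<in> {0..1}"
  shows "level_measure (section_d1 E v) s = level_measure (section_d1 C v) s"
    and "u \<in> {0..1} \<Longrightarrow> E u v = integral {0..u} (decr_rearr (section_d1 C v))"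
proof -
  have E: "copula E" "SI E" "d1S_eq E C" using up by (auto simp: incr_rearranged_def)
  let ?R = "right_deriv (\<lambda>s. copula_ext E s v)" and ?f = "section_d1 C v"
  note R = SI_copula_section[OF E(1,2) v]
  have f: "unit_measurable ?f" by (rule unit_measurable_section_d1[OF C])
  have "is_decr_rearr (\<lambda>t. d1 E t v) ?R"
    using is_decr_rearr_self[OF R(1)] is_decr_rearr_cong level_measure_d1(2)[OF E(1) v] R(3)
    by metis
  moreover have "is_decr_rearr (\<lambda>t. d1 C t v) (decr_rearr ?f)"
    using is_decr_rearr_decr_rearr[OF f] is_decr_rearr_cong level_measure_d1(2)[OF C v] by metis
  ultimately have I: "integral {0..x} ?R = integral {0..x} (decr_rearr ?f)" if "x \<in> {0<..<1}" for x
    using d1S_eq_integral_rearr_eq[OF E(3) v that] by blast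
  have L: "level_measure ?R s = level_measure (decr_rearr ?f) s" for s
    by (rule level_measure_eq_if_integrals_eq[OF R(2) unit_measurable_decr_rearr R(1)])
      (use I in \<open>auto intro!: monotone_onI decr_rearr_antimono\<close>)
  then show "level_measure (section_d1 E v) s = level_measure ?f s"
    using R(3) level_measure_decr_rearr[OF f] by simp
  have "integral {0..1} ?R = integral {0..1} (decr_rearr ?f)"
    by (rule integral_eq_if_level_measure_eq[OF R(2) unit_measurable_decr_rearr L])
  then have "integral {0..u} ?R = integral {0..u} (decr_rearr ?f)" if "u \<in> {0..1}" for u
    using I[of u] that by (cases "u = 0 \<or> u = 1") auto
  then show "E u v = integral {0..u} (decr_rearr ?f)" if "u \<in> {0..1}"
    using R(4) that by simp
qed

lemma incr_rearranged_ge: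
  assumes C: "copula C" and up: "incr_rearranged C E" and u: "u \<in> {0..1}" and v: "v \<in> {0..1}"
  shows "C u v \<le> E u v"
proof -
  let ?f = "section_d1 C v"
  have f: "unit_measurable ?f" by (rule unit_measurable_section_d1[OF C])
  note E = incr_rearranged_eq_integral_decr_rearr[OF C up v]
  have "integral {0..1} ?f = integral {0..1} (decr_rearr ?f)"
    using integral_eq_if_level_measure_eq[OF f unit_measurable_decr_rearr]
      level_measure_decr_rearr[OF f]
    by simp
  also have "\<dots> = v"
    using E(2)[of 1] copula_1v[of E v] up v by (simp add: incr_rearranged_def)
  finally have "C u v = integral {0..u} ?f"
    by (rule copula_eq_integral_section_d1[OF C v u])
  also have "\<dots> \<le> integral {0..u} (decr_rearr ?f)"
    using hardy_littlewood[OF f, of 0 u] u by simp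
  also have "\<dots> = E u v"
    using E(2)[OF u] by simp
  finally show ?thesis .
qed

section \<open>Spearman's rho and Chatterjee's xi\<close>

lemma unit_square_cbox: "{0..1::real} \<times> {0..1::real} = cbox (0, 0) (1, 1)"
  by (simp add: cbox_Pair_eq)

lemma set_integrable_bounded:
  fixes H :: "'a::euclidean_space \<Rightarrow> real"
  assumes "H \<in> borel_measurable borel" "\<And>z. \<bar>H z\<bar> \<le> B" "S \<in> sets borel" "emeasure lborel S < \<infinity>"
  shows "set_integrable lborel S H"
  unfolding set_integrable_def
  by (rule integrableI_bounded_set[where A=S and B=B]) (use assms in \<open>auto simp: indicator_def\<close>)

lemma integral_unit_square_iterated:
  fixes H :: "real \<times> real \<Rightarrow> real"
  assumes Hm: "H \<in> borel_measurable borel" and Hb: "\<And>z. \<bar>H z\<bar> \<le> 1"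
  shows "integral ({0..1} \<times> {0..1}) H
    = (\<integral>v. indicator {0..1} v * integral {0..1} (\<lambda>t. H (t, v)) \<partial>lborel)"
proof -
  let ?S = "{0..1::real} \<times> {0..1::real}"
  have "emeasure lborel ?S < \<infinity>" unfolding unit_square_cbox by (rule emeasure_lborel_cbox_finite)
  then have si: "set_integrable lborel ?S H"
    by (intro set_integrable_bounded[OF Hm Hb]) (simp add: unit_square_cbox)
  define g where "g t v = indicator ?S (t, v) * H (t, v)" for t v
  have "integral ?S H = (LINT z : ?S | lborel. H z)"
    using set_borel_integral_eq_integral(2)[OF si] by simp
  also have "\<dots> = integral\<^sup>L (lborel \<Otimes>\<^sub>M lborel) (case_prod g)"
    by (simp add: set_lebesgue_integral_def g_def case_prod_beta' lborel_prod)
  also have "\<dots> = (\<integral>v. (\<integral>t. g t v \<partial>lborel) \<partial>lborel)"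
  proof -
    have "integrable (lborel \<Otimes>\<^sub>M lborel) (case_prod g)"
      using si unfolding set_integrable_def g_def by (simp add: case_prod_beta' lborel_prod)
    then show ?thesis by (rule lborel_pair.integral_snd[symmetric])
  qed
  also have "\<dots> = (\<integral>v. indicator {0..1} v * integral {0..1} (\<lambda>t. H (t, v)) \<partial>lborel)"
  proof (rule Bochner_Integration.integral_cong[OF refl])
    fix v :: real
    have "(\<lambda>t. H (t, v)) \<in> borel_measurable borel" using Hm by measurable
    then have siv: "set_integrable lborel {0..1} (\<lambda>t. H (t, v))"
      by (rule set_integrable_bounded) (use Hb in auto)
    have "(\<integral>t. g t v \<partial>lborel) =
      (\<integral>t. indicator {0..1} v * (indicator {0..1} t *\<^sub>R H (t, v)) \<partial>lborel)"
      by (rule Bochner_Integration.integral_cong) (auto simp: g_def indicator_def)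
    also have "\<dots> = indicator {0..1} v * integral {0..1} (\<lambda>t. H (t, v))"
      using set_borel_integral_eq_integral(2)[OF siv] by (simp add: set_lebesgue_integral_def)
    finally show "(\<integral>t. g t v \<partial>lborel) = indicator {0..1} v * integral {0..1} (\<lambda>t. H (t, v))" .
  qed
  finally show ?thesis .
qed

lemma integral_square_d1_iterated:
  assumes D: "copula D"
  shows "integral ({0..1} \<times> {0..1}) (\<lambda>(t, v). (d1 D t v)\<^sup>2) =
    (\<integral>v. indicator {0..1} v * integral {0..1} (\<lambda>t. (section_d1 D v t)\<^sup>2) \<partial>lborel)"
proof -
  define H where "H z = (section_d1 D (snd z) (fst z))\<^sup>2" for z :: "real \<times> real"
  have "H \<in> borel_measurable borel"
    unfolding H_def using borel_measurable_section_d1_pair[OF D] by measurable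
  moreover have "\<bar>H z\<bar> \<le> 1" for z
    using section_d1_bounds[OF D, of "snd z" "fst z"] unfolding H_def
    by (simp add: power_le_one abs_le_iff)
  moreover have "integral ({0..1} \<times> {0..1}) (\<lambda>(t, v). (d1 D t v)\<^sup>2) = integral ({0..1} \<times> {0..1}) H"
  proof (rule integral_spike)
    have "(1::real, 0::real) \<in> Basis" by (simp add: Basis_prod_def)
    from negligible_standard_hyperplane[OF this]
    show "negligible ({z :: real \<times> real. z \<bullet> (1, 0) = 0} \<union> {z. z \<bullet> (1, 0) = 1})" by auto
    show "H z = (\<lambda>(t, v). (d1 D t v)\<^sup>2) z"
      if "z \<in> {0..1} \<times> {0..1} - ({z. z \<bullet> (1, 0) = 0} \<union> {z. z \<bullet> (1, 0) = 1})" for z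
      using that d1_eq_section_d1[of "fst z" "snd z" D] by (auto simp: H_def)
  qed
  ultimately show ?thesis by (simp add: integral_unit_square_iterated H_def)
qed

lemma chatterjee_xi_eq_if_level_measure_eq:
  assumes D: "copula D" and E: "copula E"
    and L: "\<And>v s. v \<in> {0..1} \<Longrightarrow> level_measure (section_d1 D v) s = level_measure (section_d1 E v) s"
  shows "chatterjee_xi D = chatterjee_xi E"
proof -
  have "integral {0..1} (\<lambda>t. (section_d1 D v t)\<^sup>2) = integral {0..1} (\<lambda>t. (section_d1 E v t)\<^sup>2)"
    if "v \<in> {0..1}" for v
    by (rule integral_comp_eq_if_level_measure_eq(3)[OF unit_measurable_section_d1[OF D]
          unit_measurable_section_d1[OF E] L[OF that]])
      (intro continuous_intros)
  then have "(\<lambda>v. indicator {0..1} v * integral {0..1} (\<lambda>t. (section_d1 D v t)\<^sup>2)) =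
      (\<lambda>v. indicator {0..1} v * integral {0..1} (\<lambda>t. (section_d1 E v t)\<^sup>2))"
    by (auto simp: fun_eq_iff indicator_def)
  then show ?thesis
    unfolding chatterjee_xi_def integral_square_d1_iterated[OF D] integral_square_d1_iterated[OF E]
    by simp
qed

lemma chatterjee_xi_copula_reflect: "copula D \<Longrightarrow> chatterjee_xi (copula_reflect D) = chatterjee_xi D"
  by (rule chatterjee_xi_eq_if_level_measure_eq[OF copula_copula_reflect])
    (simp_all add: level_measure_section_d1_copula_reflect)

lemma integral_unit_square_continuous:
  fixes f :: "real \<Rightarrow> real \<Rightarrow> real"
  assumes "continuous_on ({0..1} \<times> {0..1}) (\<lambda>(u, v). f u v)"
  shows "(\<lambda>(u, v). f u v) integrable_on ({0..1} \<times> {0..1})"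
    and "integral ({0..1} \<times> {0..1}) (\<lambda>(u, v). f u v)
      = integral {0..1} (\<lambda>v. integral {0..1} (\<lambda>u. f u v))"
proof -
  have c: "continuous_on (cbox (0, 0) (1, 1)) (\<lambda>(u, v). f u v)"
    using assms by (simp add: unit_square_cbox)
  show "(\<lambda>(u, v). f u v) integrable_on ({0..1} \<times> {0..1})"
    using integrable_continuous[OF c] by (simp add: unit_square_cbox)
  have "integral (cbox (0::real, 0::real) (1, 1)) (\<lambda>(u, v). f u v)
      = integral (cbox 0 1) (\<lambda>x. integral (cbox 0 1) (\<lambda>y. f x y))"
    using integral_prod_continuous[OF c] by simp
  also have "\<dots> = integral (cbox 0 1) (\<lambda>y. integral (cbox 0 1) (\<lambda>x. f x y))"
    by (rule integral_swap_continuous) (use c in simp)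
  finally show "integral ({0..1} \<times> {0..1}) (\<lambda>(u, v). f u v)
      = integral {0..1} (\<lambda>v. integral {0..1} (\<lambda>u. f u v))"
    by (simp add: unit_square_cbox)
qed

lemma spearman_rho_mono:
  assumes C: "copula C" and D: "copula D"
    and le: "\<And>u v. u \<in> {0..1} \<Longrightarrow> v \<in> {0..1} \<Longrightarrow> C u v \<le> D u v"
  shows "spearman_rho C \<le> spearman_rho D"
  using integral_le[OF integral_unit_square_continuous(1)[OF continuous_on_copula_square[OF C]]
    integral_unit_square_continuous(1)[OF continuous_on_copula_square[OF D]]] le
  by (auto simp: spearman_rho_def)

lemma spearman_rho_cong:
  "(\<And>u v. u \<in> {0..1} \<Longrightarrow> v \<in> {0..1} \<Longrightarrow> C u v = D u v) \<Longrightarrow> spearman_rho C = spearman_rho D"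
  unfolding spearman_rho_def by (rule arg_cong[where f="\<lambda>x. 12 * x - 3"], rule integral_cong) auto

lemma spearman_rho_copula_reflect:
  assumes D: "copula D"
  shows "spearman_rho (copula_reflect D) = - spearman_rho D"
proof -
  let ?S = "{0..1::real} \<times> {0..1::real}"
  have cv: "continuous_on ?S (\<lambda>(u, v::real). v)"
    by (auto intro!: continuous_intros simp: case_prod_beta')
  have "continuous_on ?S (\<lambda>(u, v). v - copula_reflect D u v)"
    using continuous_on_diff[OF cv continuous_on_copula_square[OF copula_copula_reflect[OF D]]]
    by (simp add: case_prod_beta')
  then have cD: "continuous_on ?S (\<lambda>(u, v). D (1 - u) v)" by (simp add: copula_reflect_def)
  have "integral ?S (\<lambda>(u, v). copula_reflect D u v)
      = integral ?S (\<lambda>(u, v). v) - integral ?S (\<lambda>(u, v). D (1 - u) v)"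
    using integral_diff[OF integral_unit_square_continuous(1)[OF cv]
        integral_unit_square_continuous(1)[OF cD]]
    by (simp add: case_prod_beta' copula_reflect_def)
  also have "integral ?S (\<lambda>(u, v::real). v) = 1 / 2"
    using integral_unit_square_continuous(2)[OF cv] integral_power[of 1 0 1] by simp
  also have "integral ?S (\<lambda>(u, v). D (1 - u) v) = integral ?S (\<lambda>(u, v). D u v)"
    using integral_unit_square_continuous(2)[OF cD]
      integral_unit_square_continuous(2)[OF continuous_on_copula_square[OF D]]
      integral_reflect_unit[of "\<lambda>u. D u _"] by simp
  finally show ?thesis by (simp add: spearman_rho_def)
qed

section \<open>Decreasing rearrangements\<close>

lemma decr_rearranged_eq_reflect_incr_rearranged:
  assumes C: "copula C" and "incr_rearranged C Cup" "decr_rearranged C Cdown"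
    and u: "u \<in> {0..1}" and v: "v \<in> {0..1}"
  shows "Cdown u v = v - Cup (1 - u) v"
proof -
  have "1 - u \<in> {0..1}" using u by auto
  then have "copula_reflect Cdown (1 - u) v = Cup (1 - u) v"
    using incr_rearranged_eq_integral_decr_rearr(2)[OF C \<open>incr_rearranged C Cup\<close> v]
      incr_rearranged_eq_integral_decr_rearr(2)[OF copula_copula_reflect[OF C]
        incr_rearranged_copula_reflect[OF C \<open>decr_rearranged C Cdown\<close>] v]
      decr_rearr_cong[OF level_measure_section_d1_copula_reflect[OF C v]]
    by simp
  then show ?thesis by (simp add: copula_reflect_def)
qed

lemma decr_rearranged_le:
  assumes C: "copula C" and down: "decr_rearranged C Cdown" and "u \<in> {0..1}" "v \<in> {0..1}"
  shows "Cdown u v \<le> C u v"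
proof -
  have "1 - u \<in> {0..1}" using \<open>u \<in> {0..1}\<close> by auto
  with incr_rearranged_ge[OF copula_copula_reflect[OF C] incr_rearranged_copula_reflect[OF C down]]
  show ?thesis using \<open>v \<in> {0..1}\<close> by (fastforce simp: copula_reflect_def)
qed

lemma chatterjee_xi_incr_rearranged:
  "copula C \<Longrightarrow> incr_rearranged C Cup \<Longrightarrow> chatterjee_xi Cup = chatterjee_xi C"
  by (rule chatterjee_xi_eq_if_level_measure_eq)
    (simp_all add: incr_rearranged_def incr_rearranged_eq_integral_decr_rearr(1))

lemma chatterjee_xi_decr_rearranged:
  assumes C: "copula C" and down: "decr_rearranged C Cdown"
  shows "chatterjee_xi Cdown = chatterjee_xi C"
proof -
  have "copula Cdown" using down by (simp add: decr_rearranged_def)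
  then have "chatterjee_xi Cdown = chatterjee_xi (copula_reflect Cdown)"
    by (simp add: chatterjee_xi_copula_reflect)
  also have "\<dots> = chatterjee_xi (copula_reflect C)"
    by (rule chatterjee_xi_incr_rearranged[OF copula_copula_reflect[OF C]
          incr_rearranged_copula_reflect[OF C down]])
  also have "\<dots> = chatterjee_xi C" by (rule chatterjee_xi_copula_reflect[OF C])
  finally show ?thesis .
qed

theorem corollary2p5:
  fixes C Cup Cdown :: "real \<Rightarrow> real \<Rightarrow> real"
  assumes "copula C"
    and "incr_rearranged C Cup"
    and "decr_rearranged C Cdown"
  shows "chatterjee_xi Cdown = chatterjee_xi C \<and> chatterjee_xi C = chatterjee_xi Cup \<and>
         spearman_rho Cdown \<le> spearman_rho C \<and> spearman_rho C \<le> spearman_rho Cup \<and>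
         spearman_rho Cdown = - spearman_rho Cup"
proof -
  have Cup: "copula Cup" and Cdown: "copula Cdown"
    using assms(2,3) by (auto simp: incr_rearranged_def decr_rearranged_def)
  have "spearman_rho Cdown = spearman_rho (copula_reflect Cup)"
    by (rule spearman_rho_cong)
      (simp add: copula_reflect_def decr_rearranged_eq_reflect_incr_rearranged[OF assms])
  then have "spearman_rho Cdown = - spearman_rho Cup"
    by (simp add: spearman_rho_copula_reflect[OF Cup])
  moreover have "spearman_rho Cdown \<le> spearman_rho C"
    by (rule spearman_rho_mono[OF Cdown assms(1) decr_rearranged_le[OF assms(1,3)]])
  moreover have "spearman_rho C \<le> spearman_rho Cup"
    by (rule spearman_rho_mono[OF assms(1) Cup incr_rearranged_ge[OF assms(1,2)]])
  ultimately show ?thesis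
    using chatterjee_xi_incr_rearranged[OF assms(1,2)] chatterjee_xi_decr_rearranged[OF assms(1,3)]
    by simp
qed

end
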